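(* Let $F$ be a finitely generated free group. There is an algorithm which, on input a finitely generated subgroup $H\leqslant F$ (given by a finite generating set), an element $u\in F$ and an element $w\in F$, outputs $\mathrm{Ord}_{Hu}(w)$. In particular, the order problem and the torsion problem for $F$ are computable.
   Context: For a group $G$, a subset $S\subseteq G$ and $g\in G$, $\mathrm{Ord}_S(g)=\min\{k\geq 1: g^k\in S\}$ if such $k$ exists and $0$ otherwise. The order problem asks, given a finitely generated $H\leqslant G$ and $g\in G$, to compute $\mathrm{Ord}_H(g)$; the torsion problem asks to decide whether $\mathrm{Ord}_H(g)\neq 0$. *)

theory Defs
  imports "HOL-Algebra.Algebra" "HOL-Library.Nat_Bijection"
begin

datatype recf =
    Zero
  | Succ
  | Proj nat
  | Comp recf "recf list"
  | PrimRec recf recf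
  | Mu recf

inductive eval :: "recf \<Rightarrow> nat list \<Rightarrow> nat \<Rightarrow> bool" where
  eval_Zero: "eval Zero xs 0"
| eval_Succ: "eval Succ (x # xs) (Suc x)"
| eval_Proj: "i < length xs \<Longrightarrow> eval (Proj i) xs (xs ! i)"
| eval_Comp: "list_all2 (\<lambda>g y. eval g xs y) gs ys \<Longrightarrow> eval f ys z \<Longrightarrow> eval (Comp f gs) xs z"
| eval_PrimRec0: "eval f xs z \<Longrightarrow> eval (PrimRec f g) (0 # xs) z"
| eval_PrimRecS: "eval (PrimRec f g) (n # xs) y \<Longrightarrow> eval g (y # n # xs) z
                   \<Longrightarrow> eval (PrimRec f g) (Suc n # xs) z"
| eval_Mu: "eval g (z # xs) 0 \<Longrightarrow> (\<forall>y<z. \<exists>v. eval g (y # xs) v \<and> 0 < v)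
             \<Longrightarrow> eval (Mu g) xs z"

text \<open>Words over the alphabet {\<plusminus>1,...,\<plusminus>n}; the integer i > 0 stands for the
  generator x_i and -i for its inverse. Elements are freely reduced words.\<close>

fun red :: "int list \<Rightarrow> int list" where
  "red [] = []"
| "red (a # xs) = (case red xs of [] \<Rightarrow> [a] | b # ys \<Rightarrow> (if b = - a then ys else a # b # ys))"

definition reduced :: "int list \<Rightarrow> bool" where
  "reduced xs \<longleftrightarrow> (\<forall>i. Suc i < length xs \<longrightarrow> xs ! Suc i \<noteq> - (xs ! i))"

definition free_group :: "nat \<Rightarrow> int list monoid" where
  "free_group n = \<lparr> carrier = {xs. reduced xs \<and> (\<forall>a\<in>set xs. a \<noteq> 0 \<and> \<bar>a\<bar> \<le> int n)},
                    monoid.mult = (\<lambda>xs ys. red (xs @ ys)),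
                    monoid.one = [] \<rparr>"

definition OrdS :: "('a, 'b) monoid_scheme \<Rightarrow> 'a set \<Rightarrow> 'a \<Rightarrow> nat" where
  "OrdS G S g = (if \<exists>k::nat\<ge>1. g [^]\<^bsub>G\<^esub> k \<in> S then (LEAST k::nat. k \<ge> 1 \<and> g [^]\<^bsub>G\<^esub> k \<in> S) else 0)"

definition enc_word :: "int list \<Rightarrow> nat" where
  "enc_word xs = list_encode (map int_encode xs)"

definition enc_words :: "int list list \<Rightarrow> nat" where
  "enc_words gs = list_encode (map enc_word gs)"

end

theory Submission
  imports Defs
begin

(* Rather than deciding membership in H = <gs> directly, the algorithm searches for certificates.
   Put t k = w^k u^-1, so that w^k lies in H u iff t k lies in H.  Membership of t k is certified by
   a product of generators, non-membership by a finite deterministic graph with inverse edges in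
   which every generator reads a loop at the base vertex but t k does not; the Schreier graph of H
   restricted to the cosets of prefixes of generators is such a graph, so certificates exist.
   Moreover, if some t k lies in H then one does with k <= |u| + 2 * sum (|g| + 1) + 1: writing
   w = c v c^-1 with v cyclically reduced, the prefixes c v^j of t k lie in those finitely many
   cosets, two of them coincide, and this yields a smaller exponent.  So an unbounded search for the
   least valid certificate terminates, and its first component is the order. *)

section \<open>Partial recursive functions\<close>

definition computable :: "nat \<Rightarrow> (nat list \<Rightarrow> nat) \<Rightarrow> bool" where
  "computable k f \<longleftrightarrow> (\<exists>r. \<forall>xs. length xs = k \<longrightarrow> eval r xs (f xs))"

lemma computableI: "(\<And>xs. length xs = k \<Longrightarrow> eval r xs (f xs)) \<Longrightarrow> computable k f"
  unfolding computable_def by blast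

lemma computable_cong: "computable k f \<Longrightarrow> (\<And>xs. length xs = k \<Longrightarrow> f xs = g xs) \<Longrightarrow> computable k g"
  unfolding computable_def by metis

lemma computable_zero: "computable k (\<lambda>xs. 0)"
  by (rule computableI[where r=Zero]) (rule eval_Zero)

lemma computable_proj: "i < k \<Longrightarrow> computable k (\<lambda>xs. xs ! i)"
  by (rule computableI[where r="Proj i"]) (auto intro: eval_Proj)

lemma computable_programs:
  assumes "\<forall>f\<in>set fs. computable k f"
  shows "\<exists>rs. \<forall>xs. length xs = k \<longrightarrow> list_all2 (\<lambda>g y. eval g xs y) rs (map (\<lambda>f. f xs) fs)"
  using assms
proof (induction fs)
  case Nil
  then show ?case by (intro exI[of _ "[]"]) auto
next
  case (Cons f fs)
  then obtain rs where rs: "\<forall>xs. length xs = k \<longrightarrow> list_all2 (\<lambda>g y. eval g xs y) rs (map (\<lambda>f. f xs) fs)"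
    by auto
  from Cons.prems obtain r where r: "\<forall>xs. length xs = k \<longrightarrow> eval r xs (f xs)"
    unfolding computable_def by auto
  show ?case using rs r by (intro exI[of _ "r # rs"]) auto
qed

lemma computable_compose:
  assumes "computable m g" "\<forall>f\<in>set fs. computable k f" "length fs = m"
  shows "computable k (\<lambda>xs. g (map (\<lambda>f. f xs) fs))"
proof -
  obtain rs where rs: "\<forall>xs. length xs = k \<longrightarrow> list_all2 (\<lambda>g y. eval g xs y) rs (map (\<lambda>f. f xs) fs)"
    using computable_programs[OF assms(2)] by blast
  obtain rg where rg: "\<forall>xs. length xs = m \<longrightarrow> eval rg xs (g xs)"
    using assms(1) unfolding computable_def by blast
  show ?thesis
    by (rule computableI[where r="Comp rg rs"]) (use rs rg assms(3) in \<open>auto intro!: eval_Comp\<close>)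
qed

lemma computable_compose1:
  assumes "computable 1 (\<lambda>ys. F (ys!0))" "computable k a"
  shows "computable k (\<lambda>xs. F (a xs))"
  using computable_compose[OF assms(1), of "[a]" k] assms(2) by simp

lemma computable_compose2:
  assumes "computable 2 (\<lambda>ys. F (ys!0) (ys!1))" "computable k a" "computable k b"
  shows "computable k (\<lambda>xs. F (a xs) (b xs))"
  using computable_compose[OF assms(1), of "[a,b]" k] assms(2,3) by simp

lemma computable_compose3:
  assumes "computable 3 (\<lambda>ys. F (ys!0) (ys!1) (ys!2))" "computable k a" "computable k b" "computable k c"
  shows "computable k (\<lambda>xs. F (a xs) (b xs) (c xs))"
  using computable_compose[OF assms(1), of "[a,b,c]" k] assms(2-4) by simp

lemma computable_Succ: "computable 1 (\<lambda>ys. Suc (ys!0))"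
proof (rule computableI[where r=Succ])
  fix xs :: "nat list" assume "length xs = 1"
  then obtain x where "xs = [x]" by (cases xs) auto
  then show "eval Succ xs (Suc (xs!0))" by (auto intro: eval_Succ)
qed

lemma computable_Suc: "computable k a \<Longrightarrow> computable k (\<lambda>xs. Suc (a xs))"
  by (rule computable_compose1[OF computable_Succ])

lemma computable_const: "computable k (\<lambda>xs. c)"
  by (induction c) (auto intro: computable_zero computable_Suc)

fun natrec :: "(nat \<Rightarrow> nat \<Rightarrow> nat \<Rightarrow> nat) \<Rightarrow> nat \<Rightarrow> nat \<Rightarrow> nat \<Rightarrow> nat" where
  "natrec f e z 0 = z"
| "natrec f e z (Suc i) = f e i (natrec f e z i)"

lemma eval_PrimRec_natrec:
  assumes f: "\<forall>xs. length xs = 2 \<longrightarrow> eval rf xs (xs!1)"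
    and g: "\<forall>ys. length ys = 4 \<longrightarrow> eval rg ys (F (ys!2) (ys!1) (ys!0))"
  shows "eval (PrimRec rf rg) [m, e, z] (natrec F e z m)"
proof (induction m)
  case 0
  then show ?case using f[rule_format, of "[e,z]"] by (auto intro!: eval_PrimRec0)
next
  case (Suc m)
  show ?case
    by (rule eval_PrimRecS[OF Suc]) (use g[rule_format, of "[natrec F e z m, m, e, z]"] in simp)
qed

lemma computable_natrec3:
  assumes "computable 3 (\<lambda>ys. F (ys!0) (ys!1) (ys!2))"
  shows "computable 3 (\<lambda>ys. natrec F (ys!1) (ys!2) (ys!0))"
proof -
  have g: "computable 4 (\<lambda>ys. F (ys!2) (ys!1) (ys!0))"
    using computable_compose3[OF assms, of 4 "\<lambda>ys. ys!2" "\<lambda>ys. ys!1" "\<lambda>ys. ys!0"]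
    by (simp add: computable_proj)
  then obtain rg where rg: "\<forall>ys. length ys = 4 \<longrightarrow> eval rg ys (F (ys!2) (ys!1) (ys!0))"
    unfolding computable_def by blast
  have f: "\<forall>xs. length xs = 2 \<longrightarrow> eval (Proj 1) xs (xs!1)" by (auto intro: eval_Proj)
  show ?thesis
  proof (rule computableI[where r="PrimRec (Proj 1) rg"])
    fix xs :: "nat list" assume "length xs = 3"
    then obtain m e z where "xs = [m,e,z]"
      by (cases xs; cases "tl xs"; cases "tl (tl xs)") auto
    then show "eval (PrimRec (Proj 1) rg) xs (natrec F (xs!1) (xs!2) (xs!0))"
      using eval_PrimRec_natrec[OF f rg] by simp
  qed
qed

lemma computable_natrec:
  assumes "computable 3 (\<lambda>ys. F (ys!0) (ys!1) (ys!2))" "computable k e" "computable k z" "computable k n"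
  shows "computable k (\<lambda>xs. natrec F (e xs) (z xs) (n xs))"
  using computable_compose3[OF computable_natrec3[OF assms(1)] assms(4,2,3)] by simp

lemma eval_Mu_Least:
  assumes "computable (Suc k) p"
  shows "\<exists>r. \<forall>xs. length xs = k \<and> (\<exists>z. p (z # xs) = 0) \<longrightarrow> eval r xs (LEAST z. p (z # xs) = 0)"
proof -
  obtain rp where rp: "\<forall>ys. length ys = Suc k \<longrightarrow> eval rp ys (p ys)"
    using assms unfolding computable_def by blast
  show ?thesis
  proof (intro exI[of _ "Mu rp"] allI impI)
    fix xs :: "nat list" assume a: "length xs = k \<and> (\<exists>z. p (z # xs) = 0)"
    then have l: "p ((LEAST z. p (z # xs) = 0) # xs) = 0" by (metis (mono_tags) LeastI)
    show "eval (Mu rp) xs (LEAST z. p (z # xs) = 0)"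
    proof (rule eval_Mu)
      show "eval rp ((LEAST z. p (z # xs) = 0) # xs) 0" using rp a l by (metis length_Cons)
      show "\<forall>y<(LEAST z. p (z # xs) = 0). \<exists>v. eval rp (y # xs) v \<and> 0 < v"
      proof (intro allI impI)
        fix y assume "y < (LEAST z. p (z # xs) = 0)"
        then have "p (y # xs) \<noteq> 0" by (rule not_less_Least)
        then show "\<exists>v. eval rp (y # xs) v \<and> 0 < v" using rp[rule_format, of "y#xs"] a by auto
      qed
    qed
  qed
qed

lemma computable_Least:
  assumes "computable (Suc k) p" "\<And>xs. length xs = k \<Longrightarrow> \<exists>z. p (z # xs) = 0"
  shows "computable k (\<lambda>xs. LEAST z. p (z # xs) = 0)"
  using eval_Mu_Least[OF assms(1)] assms(2) unfolding computable_def by blast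

lemma computable_add2: "computable 2 (\<lambda>ys. ys!0 + ys!1)"
proof -
  have "computable 3 (\<lambda>ys. Suc (ys!2))" by (rule computable_Suc[OF computable_proj]) simp
  then have "computable 3 (\<lambda>ys. natrec (\<lambda>e i acc. Suc acc) (ys!1) (ys!2) (ys!0))"
    by (intro computable_natrec3) simp
  then have c: "computable 2 (\<lambda>xs. natrec (\<lambda>e i acc. Suc acc) 0 (xs!1) (xs!0))"
    using computable_compose3[of "\<lambda>n e z. natrec (\<lambda>e i acc. Suc acc) e z n" 2 "\<lambda>xs. xs!0" "\<lambda>xs. 0" "\<lambda>xs. xs!1"]
    by (simp add: computable_proj computable_zero)
  have "natrec (\<lambda>e i acc. Suc acc) e z m = m + z" for e z m by (induction m) auto
  with c show ?thesis by simp
qed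

lemma computable_add[intro]: "computable k a \<Longrightarrow> computable k b \<Longrightarrow> computable k (\<lambda>xs. a xs + b xs)"
  by (rule computable_compose2[OF computable_add2])

lemma computable_diff2: "computable 2 (\<lambda>ys. ys!0 - ys!1)"
proof -
  have p: "computable 3 (\<lambda>ys. natrec (\<lambda>e i acc. i) (ys!1) (ys!2) (ys!0))"
    by (intro computable_natrec3 computable_proj) simp
  have pr: "natrec (\<lambda>e i acc. i) e 0 m = m - 1" for e m by (induction m) auto
  have "computable 3 (\<lambda>ys. ys!2 - 1)"
    using computable_compose3[OF p, of 3 "\<lambda>ys. ys!2" "\<lambda>ys. 0" "\<lambda>ys. 0"]
    by (simp add: pr computable_proj computable_zero)
  then have q: "computable 3 (\<lambda>ys. natrec (\<lambda>e i acc. acc - 1) (ys!1) (ys!2) (ys!0))"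
    by (intro computable_natrec3) simp
  have qr: "natrec (\<lambda>e i acc. acc - 1) e z m = z - m" for e z m by (induction m) auto
  have "computable 2 (\<lambda>ys. natrec (\<lambda>e i acc. acc - 1) 0 (ys!0) (ys!1))"
    using computable_compose3[OF q, of 2 "\<lambda>ys. ys!1" "\<lambda>ys. 0" "\<lambda>ys. ys!0"]
    by (simp add: computable_proj computable_zero)
  then show ?thesis by (rule computable_cong) (simp only: qr)
qed

lemma computable_diff[intro]: "computable k a \<Longrightarrow> computable k b \<Longrightarrow> computable k (\<lambda>xs. a xs - b xs)"
  by (rule computable_compose2[OF computable_diff2])

lemma computable_mult2: "computable 2 (\<lambda>ys. ys!0 * ys!1)"
proof -
  have "computable 3 (\<lambda>ys. ys!2 + ys!0)" by (intro computable_add computable_proj) auto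
  then have q: "computable 3 (\<lambda>ys. natrec (\<lambda>e i acc. acc + e) (ys!1) (ys!2) (ys!0))"
    by (intro computable_natrec3) simp
  have qr: "natrec (\<lambda>e i acc. acc + e) e 0 m = m * e" for e m by (induction m) auto
  show ?thesis using computable_compose3[OF q, of 2 "\<lambda>ys. ys!0" "\<lambda>ys. ys!1" "\<lambda>ys. 0"]
    by (simp add: qr computable_proj computable_zero)
qed

lemma computable_mult[intro]: "computable k a \<Longrightarrow> computable k b \<Longrightarrow> computable k (\<lambda>xs. a xs * b xs)"
  by (rule computable_compose2[OF computable_mult2])

definition decidable :: "nat \<Rightarrow> (nat list \<Rightarrow> bool) \<Rightarrow> bool" where
  "decidable k P \<longleftrightarrow> computable k (\<lambda>xs. if P xs then 1 else 0)"

lemma decidable_le[intro]: "computable k a \<Longrightarrow> computable k b \<Longrightarrow> decidable k (\<lambda>xs. a xs \<le> b xs)"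
  unfolding decidable_def
  by (rule computable_cong[where f="\<lambda>xs. 1 - (a xs - b xs)"]) (auto intro!: computable_diff computable_const)

lemma decidable_not[intro]: "decidable k P \<Longrightarrow> decidable k (\<lambda>xs. \<not> P xs)"
  unfolding decidable_def
  by (rule computable_cong[where f="\<lambda>xs. 1 - (if P xs then 1 else 0)"]) (auto intro: computable_const)

lemma decidable_conj[intro]: "decidable k P \<Longrightarrow> decidable k Q \<Longrightarrow> decidable k (\<lambda>xs. P xs \<and> Q xs)"
  unfolding decidable_def
  by (rule computable_cong[where f="\<lambda>xs. (if P xs then 1 else 0) * (if Q xs then 1 else 0)"]) auto

lemma decidable_disj[intro]: "decidable k P \<Longrightarrow> decidable k Q \<Longrightarrow> decidable k (\<lambda>xs. P xs \<or> Q xs)"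
proof -
  assume a: "decidable k P" "decidable k Q"
  have "decidable k (\<lambda>xs. \<not> (\<not> P xs \<and> \<not> Q xs))"
    by (intro decidable_not decidable_conj a)
  then show ?thesis by simp
qed

lemma decidable_imp[intro]: "decidable k P \<Longrightarrow> decidable k Q \<Longrightarrow> decidable k (\<lambda>xs. P xs \<longrightarrow> Q xs)"
  using decidable_disj[OF decidable_not] by (simp only: imp_conv_disj)

lemma decidable_less[intro]: "computable k a \<Longrightarrow> computable k b \<Longrightarrow> decidable k (\<lambda>xs. a xs < b xs)"
  using decidable_not[OF decidable_le[of k b a]] by (simp add: not_le)

lemma decidable_eq[intro]: "computable k a \<Longrightarrow> computable k b \<Longrightarrow> decidable k (\<lambda>xs. a xs = b xs)"
  using decidable_conj[OF decidable_le[of k a b] decidable_le[of k b a]] by (simp add: eq_iff)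

lemma decidable_const[intro]: "decidable k (\<lambda>xs. c)"
  unfolding decidable_def by (rule computable_const)

lemma computable_If[intro]:
  assumes "decidable k P" "computable k a" "computable k b"
  shows "computable k (\<lambda>xs. if P xs then a xs else b xs)"
proof (rule computable_cong[where f="\<lambda>xs. (if P xs then 1 else 0) * a xs + (1 - (if P xs then 1 else 0)) * b xs"])
  have p: "computable k (\<lambda>xs. if P xs then 1 else 0)" using assms(1) unfolding decidable_def .
  show "computable k (\<lambda>xs. (if P xs then 1 else 0) * a xs + (1 - (if P xs then 1 else 0)) * b xs)"
    by (intro computable_add computable_mult computable_diff computable_const p assms(2,3))
qed auto

lemma eval_postcompose:
  assumes "computable 1 (\<lambda>ys. f (ys ! 0))"
  obtains r' where "\<And>xs y. eval r xs y \<Longrightarrow> eval r' xs (f y)"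
proof -
  obtain rf where rf: "\<forall>ys. length ys = 1 \<longrightarrow> eval rf ys (f (ys ! 0))"
    using assms unfolding computable_def by blast
  have "eval (Comp rf [r]) xs (f y)" if "eval r xs y" for xs y
    by (rule eval_Comp[of _ _ "[y]"]) (use that rf[rule_format, of "[y]"] in auto)
  then show ?thesis using that by blast
qed

lemma eval_drop_middle_zero:
  assumes "eval r [a, 0, b] y"
  shows "eval (Comp r [Proj 0, Zero, Proj 1]) [a, b] y"
proof (rule eval_Comp[OF _ assms])
  show "list_all2 (\<lambda>g y. eval g [a, b] y) [Proj 0, Zero, Proj 1] [a, 0, b]"
    using eval_Proj[of 0 "[a, b]"] eval_Proj[of 1 "[a, b]"] eval_Zero by simp
qed

section \<open>Coding of pairs and lists\<close>

lemma computable_triangle: "computable k a \<Longrightarrow> computable k (\<lambda>xs. triangle (a xs))"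
proof -
  have "computable 3 (\<lambda>ys. ys!2 + Suc (ys!1))"
    by (intro computable_add computable_Suc computable_proj) auto
  then have q: "computable k (\<lambda>xs. natrec (\<lambda>e i acc. acc + Suc i) 0 0 (a xs))" if "computable k a" for a
    using that by (intro computable_natrec computable_const) auto
  have qr: "natrec (\<lambda>e i acc. acc + Suc i) e 0 m = triangle m" for e m by (induction m) auto
  show "computable k a \<Longrightarrow> ?thesis" using q qr by simp
qed

definition pair :: "nat \<Rightarrow> nat \<Rightarrow> nat" where "pair a b = prod_encode (a, b)"

definition pfst :: "nat \<Rightarrow> nat" where "pfst x = fst (prod_decode x)"

definition psnd :: "nat \<Rightarrow> nat" where "psnd x = snd (prod_decode x)"

lemma pfst_pair[simp]: "pfst (pair a b) = a" and psnd_pair[simp]: "psnd (pair a b) = b"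
  by (auto simp: pair_def pfst_def psnd_def)

lemma pair_eq_iff[simp]: "pair a b = pair c d \<longleftrightarrow> a = c \<and> b = d"
  by (auto simp: pair_def)

lemma pair_surj: "pair (pfst x) (psnd x) = x"
  by (simp add: pair_def pfst_def psnd_def)

lemma computable_pair[intro]:
  "computable k a \<Longrightarrow> computable k b \<Longrightarrow> computable k (\<lambda>xs. pair (a xs) (b xs))"
  unfolding pair_def prod_encode_def
  by (simp, intro computable_add computable_triangle) auto

lemma pair_unfold: "x = triangle (pfst x + psnd x) + pfst x"
  using pair_surj[of x] by (simp add: pair_def prod_encode_def)

lemma triangle_mono: "m \<le> n \<Longrightarrow> triangle m \<le> triangle n"
  by (induction n) (auto simp: le_Suc_eq)

lemma Least_triangle_gt:
  "(LEAST s. x < triangle (Suc s)) = pfst x + psnd x"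
proof -
  let ?a = "pfst x" and ?b = "psnd x"
  have x: "x = triangle (?a + ?b) + ?a" by (rule pair_unfold)
  have 1: "x < triangle (Suc (?a + ?b))" using x by simp
  have 2: "\<not> x < triangle (Suc s)" if "s < ?a + ?b" for s
    using triangle_mono[of "Suc s" "?a + ?b"] that x by simp
  show ?thesis
    by (rule Least_equality) (use 1 2 in \<open>force, meson not_less\<close>)
qed

lemma le_triangle: "n \<le> triangle n"
  by (induction n) auto

lemma computable_pfst_plus_psnd: "computable 1 (\<lambda>ys. pfst (ys!0) + psnd (ys!0))"
proof -
  define p where "p = (\<lambda>ys::nat list. if ys!1 < triangle (Suc (ys!0)) then 0 else (1::nat))"
  have c: "computable (Suc 1) p" unfolding p_def
    by (intro computable_If decidable_less computable_proj computable_triangle computable_Suc computable_const) auto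
  have ex: "\<exists>z. p (z # xs) = 0" if "length xs = 1" for xs
    using le_triangle[of "Suc (xs!0)"] by (intro exI[of _ "xs!0"]) (auto simp: p_def)
  from computable_Least[OF c ex] have "computable 1 (\<lambda>xs. LEAST z. p (z # xs) = 0)" .
  then show ?thesis by (rule computable_cong) (simp add: p_def Least_triangle_gt[symmetric])
qed

lemma computable_pfst[intro]: "computable k a \<Longrightarrow> computable k (\<lambda>xs. pfst (a xs))"
proof -
  have "computable 1 (\<lambda>ys. ys!0 - triangle (pfst (ys!0) + psnd (ys!0)))"
    by (intro computable_diff computable_triangle computable_proj computable_pfst_plus_psnd) auto
  then have "computable 1 (\<lambda>ys. pfst (ys!0))"
    by (rule computable_cong) (metis add_diff_cancel_left' pair_unfold)
  then show "computable k a \<Longrightarrow> ?thesis" by (rule computable_compose1)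
qed

lemma computable_psnd[intro]: "computable k a \<Longrightarrow> computable k (\<lambda>xs. psnd (a xs))"
proof -
  have "computable 1 (\<lambda>ys. (pfst (ys!0) + psnd (ys!0)) - pfst (ys!0))"
    by (intro computable_diff computable_pfst computable_proj computable_pfst_plus_psnd) auto
  then have "computable 1 (\<lambda>ys. psnd (ys!0))" by simp
  then show "computable k a \<Longrightarrow> ?thesis" by (rule computable_compose1)
qed

lemmas computable_intros =
  computable_proj computable_const computable_Suc computable_add computable_diff computable_mult
  computable_If computable_pair computable_pfst computable_psnd
  decidable_le decidable_less decidable_eq decidable_not decidable_conj decidable_disj decidable_imp decidable_const computable_natrec

definition cons_code :: "nat \<Rightarrow> nat \<Rightarrow> nat" where "cons_code x c = Suc (pair x c)"

definition hd_code :: "nat \<Rightarrow> nat" where "hd_code c = pfst (c - 1)"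

definition tl_code :: "nat \<Rightarrow> nat" where "tl_code c = psnd (c - 1)"

lemma hd_code_cons_code[simp]:
  "hd_code (cons_code x c) = x" and tl_code_cons_code[simp]: "tl_code (cons_code x c) = c"
  and cons_code_neq_0[simp]: "cons_code x c \<noteq> 0"
  by (auto simp: hd_code_def tl_code_def cons_code_def)

lemma hd_code_0[simp]: "hd_code 0 = 0" and tl_code_0[simp]: "tl_code 0 = 0"
  by (auto simp: hd_code_def tl_code_def pfst_def psnd_def prod_decode_def prod_decode_aux.simps)

lemma list_encode_Cons[simp]: "list_encode (x # xs) = cons_code x (list_encode xs)"
  by (simp add: cons_code_def pair_def)

declare list_encode.simps(2)[simp del]

lemma computable_cons_code[intro]:
  "computable k a \<Longrightarrow> computable k b \<Longrightarrow> computable k (\<lambda>xs. cons_code (a xs) (b xs))"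
  unfolding cons_code_def by (intro computable_intros)

lemma computable_hd_code[intro]: "computable k a \<Longrightarrow> computable k (\<lambda>xs. hd_code (a xs))"
  unfolding hd_code_def by (intro computable_intros)

lemma computable_tl_code[intro]: "computable k a \<Longrightarrow> computable k (\<lambda>xs. tl_code (a xs))"
  unfolding tl_code_def by (intro computable_intros)

lemma length_le_list_encode: "length xs \<le> list_encode xs"
proof (induction xs)
  case (Cons x xs)
  then show ?case
    using le_prod_encode_2[of "list_encode xs" x] by (simp add: cons_code_def pair_def)
qed simp

lemma natrec_funpow: "natrec (\<lambda>e i st. g e st) e z n = (g e ^^ n) z"
  by (induction n) auto

definition foldl_step_code :: "(nat \<Rightarrow> nat \<Rightarrow> nat \<Rightarrow> nat) \<Rightarrow> nat \<Rightarrow> nat \<Rightarrow> nat" where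
  "foldl_step_code f e st =
     (if psnd st = 0 then st else pair (f e (hd_code (psnd st)) (pfst st)) (tl_code (psnd st)))"

(* Iterating c times suffices, as a list is no longer than its code (length_le_list_encode). *)
definition foldl_code :: "(nat \<Rightarrow> nat \<Rightarrow> nat \<Rightarrow> nat) \<Rightarrow> nat \<Rightarrow> nat \<Rightarrow> nat \<Rightarrow> nat" where
  "foldl_code f e a c = pfst (natrec (\<lambda>e i st. foldl_step_code f e st) e (pair a c) c)"

lemma foldl_step_code_Nil: "(foldl_step_code f e ^^ m) (pair a 0) = pair a 0"
  by (induction m) (auto simp: foldl_step_code_def)

lemma foldl_step_code_list:
  "(foldl_step_code f e ^^ length xs) (pair a (list_encode xs)) = pair (foldl (\<lambda>acc x. f e x acc) a xs) 0"
proof (induction xs arbitrary: a)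
  case (Cons x xs)
  have "foldl_step_code f e (pair a (list_encode (x # xs))) = pair (f e x a) (list_encode xs)"
    by (simp add: foldl_step_code_def list_encode_Cons)
  then show ?case using Cons by (simp add: funpow_Suc_right del: funpow.simps)
qed simp

lemma foldl_code_list_encode[simp]:
  "foldl_code f e a (list_encode xs) = foldl (\<lambda>acc x. f e x acc) a xs"
proof -
  have n: "list_encode xs = (list_encode xs - length xs) + length xs"
    using length_le_list_encode[of xs] by simp
  have "(foldl_step_code f e ^^ list_encode xs) (pair a (list_encode xs))
      = pair (foldl (\<lambda>acc x. f e x acc) a xs) 0"
    by (subst n, subst funpow_add) (simp add: foldl_step_code_list foldl_step_code_Nil)
  then show ?thesis by (simp add: foldl_code_def natrec_funpow)
qed

lemma computable_foldl_code[intro]: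
  assumes f: "computable 3 (\<lambda>ys. f (ys!0) (ys!1) (ys!2))" and "computable k e" "computable k a" "computable k c"
  shows "computable k (\<lambda>xs. foldl_code f (e xs) (a xs) (c xs))"
proof -
  have p2: "computable 3 (\<lambda>ys. ys!2)" and p0: "computable 3 (\<lambda>ys. ys!0)"
    by (auto intro: computable_proj)
  have f': "computable 3 (\<lambda>ys. f (ys!0) (hd_code (psnd (ys!2))) (pfst (ys!2)))"
    by (rule computable_compose3[OF f p0 computable_hd_code[OF computable_psnd[OF p2]] computable_pfst[OF p2]])
  show ?thesis
    unfolding foldl_code_def foldl_step_code_def
    by (intro computable_intros computable_hd_code computable_tl_code assms(2-4) f' p2)
qed

definition ball_code :: "(nat \<Rightarrow> nat \<Rightarrow> bool) \<Rightarrow> nat \<Rightarrow> nat \<Rightarrow> nat" where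
  "ball_code P e c = foldl_code (\<lambda>e x acc. if acc \<noteq> 0 \<and> P e x then 1 else 0) e 1 c"

definition bex_code :: "(nat \<Rightarrow> nat \<Rightarrow> bool) \<Rightarrow> nat \<Rightarrow> nat \<Rightarrow> nat" where
  "bex_code P e c = foldl_code (\<lambda>e x acc. if acc \<noteq> 0 \<or> P e x then 1 else 0) e 0 c"

lemma ball_code_list_encode[simp]:
  "ball_code P e (list_encode xs) = (if \<forall>x\<in>set xs. P e x then 1 else 0)"
proof -
  have "foldl (\<lambda>acc x. if acc \<noteq> 0 \<and> P e x then 1 else 0) b xs
      = (if b \<noteq> 0 \<and> (\<forall>x\<in>set xs. P e x) then 1 else 0)" if "b \<le> 1" for b :: nat
    using that by (induction xs arbitrary: b) auto
  then show ?thesis by (simp add: ball_code_def)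
qed

lemma bex_code_list_encode[simp]:
  "bex_code P e (list_encode xs) = (if \<exists>x\<in>set xs. P e x then 1 else 0)"
proof -
  have "foldl (\<lambda>acc x. if acc \<noteq> 0 \<or> P e x then 1 else 0) b xs
      = (if b \<noteq> 0 \<or> (\<exists>x\<in>set xs. P e x) then 1 else 0)" if "b \<le> 1" for b :: nat
    using that by (induction xs arbitrary: b) auto
  then show ?thesis by (simp add: bex_code_def)
qed

lemma decidable_compose2:
  assumes "decidable 2 (\<lambda>ys. P (ys!0) (ys!1))" "computable k a" "computable k b"
  shows "decidable k (\<lambda>xs. P (a xs) (b xs))"
  using computable_compose2[of "\<lambda>x y. if P x y then 1 else 0", OF assms[unfolded decidable_def]]
  unfolding decidable_def by simp

lemma computable_ball_code[intro]:
  assumes "decidable 2 (\<lambda>ys. P (ys!0) (ys!1))" "computable k e" "computable k c"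
  shows "computable k (\<lambda>xs. ball_code P (e xs) (c xs))"
proof -
  have "decidable 3 (\<lambda>ys. P (ys!0) (ys!1))"
    by (rule decidable_compose2[OF assms(1)]) (auto intro: computable_proj)
  then show ?thesis
    unfolding ball_code_def by (intro computable_intros computable_foldl_code assms(2,3)) simp_all
qed

lemma computable_bex_code[intro]:
  assumes "decidable 2 (\<lambda>ys. P (ys!0) (ys!1))" "computable k e" "computable k c"
  shows "computable k (\<lambda>xs. bex_code P (e xs) (c xs))"
proof -
  have "decidable 3 (\<lambda>ys. P (ys!0) (ys!1))"
    by (rule decidable_compose2[OF assms(1)]) (auto intro: computable_proj)
  then show ?thesis
    unfolding bex_code_def by (intro computable_intros computable_foldl_code assms(2,3)) simp_all
qed

definition nth_code :: "nat \<Rightarrow> nat \<Rightarrow> nat" where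
  "nth_code c i = hd_code (natrec (\<lambda>e j acc. tl_code acc) 0 c i)"

lemma computable_nth_code[intro]:
  "computable k a \<Longrightarrow> computable k b \<Longrightarrow> computable k (\<lambda>xs. nth_code (a xs) (b xs))"
  unfolding nth_code_def by (intro computable_intros computable_hd_code computable_tl_code) simp_all

lemma nth_code_list_encode: "nth_code (list_encode xs) i = (if i < length xs then xs ! i else 0)"
proof -
  have "(tl_code ^^ i) (list_encode xs) = list_encode (drop i xs)"
  proof (induction i arbitrary: xs)
    case (Suc i)
    then show ?case
      by (cases xs) (use Suc.IH[of "[]"] in \<open>auto simp: funpow_Suc_right simp del: funpow.simps\<close>)
  qed simp
  moreover have "hd_code (list_encode (drop i xs)) = (if i < length xs then xs ! i else 0)"
    by (cases "i < length xs") (simp_all add: Cons_nth_drop_Suc[symmetric])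
  ultimately show ?thesis unfolding nth_code_def natrec_funpow[of "\<lambda>e. tl_code"] by simp
qed

definition length_code :: "nat \<Rightarrow> nat" where "length_code c = foldl_code (\<lambda>e x acc. Suc acc) 0 0 c"

lemma computable_length_code[intro]: "computable k a \<Longrightarrow> computable k (\<lambda>xs. length_code (a xs))"
  unfolding length_code_def by (intro computable_intros computable_foldl_code) simp_all

lemma length_code_list_encode[simp]: "length_code (list_encode xs) = length xs"
proof -
  have "foldl (\<lambda>acc x. Suc acc) b xs = b + length xs" for b by (induction xs arbitrary: b) auto
  then show ?thesis by (simp add: length_code_def)
qed

section \<open>Free reduction\<close>

lemma reduced_Nil[simp]: "reduced []"
  and reduced_singleton[simp]: "reduced [a]"
  by (simp_all add: reduced_def)

lemma reduced_Cons_Cons[simp]: "reduced (a # b # l) \<longleftrightarrow> b \<noteq> - a \<and> reduced (b # l)"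
  unfolding reduced_def
proof (intro iffI conjI allI impI)
  fix i assume H: "\<forall>i. Suc i < length (a # b # l) \<longrightarrow> (a # b # l) ! Suc i \<noteq> - (a # b # l) ! i"
    and "Suc i < length (b # l)"
  then show "(b # l) ! Suc i \<noteq> - (b # l) ! i" using H[rule_format, of "Suc i"] by simp
next
  assume H: "\<forall>i. Suc i < length (a # b # l) \<longrightarrow> (a # b # l) ! Suc i \<noteq> - (a # b # l) ! i"
  then show "b \<noteq> - a" using H[rule_format, of 0] by simp
next
  fix i assume H: "b \<noteq> - a \<and> (\<forall>i. Suc i < length (b # l) \<longrightarrow> (b # l) ! Suc i \<noteq> - (b # l) ! i)"
    and "Suc i < length (a # b # l)"
  then show "(a # b # l) ! Suc i \<noteq> - (a # b # l) ! i" by (cases i) auto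
qed

lemma reduced_tl: "reduced (a # l) \<Longrightarrow> reduced l"
  by (cases l) auto

lemma reduced_append:
  "reduced (xs @ ys) \<longleftrightarrow> reduced xs \<and> reduced ys \<and> (xs \<noteq> [] \<longrightarrow> ys \<noteq> [] \<longrightarrow> hd ys \<noteq> - last xs)"
proof (induction xs rule: induct_list012)
  case 1 then show ?case by simp
next
  case (2 a) then show ?case by (cases ys) auto
next
  case (3 a b l) then show ?case by auto
qed

lemma reduced_prefix:
  "reduced (xs @ ys) \<Longrightarrow> reduced xs" and reduced_suffix: "reduced (xs @ ys) \<Longrightarrow> reduced ys"
  by (auto simp: reduced_append)

fun redstep :: "int \<Rightarrow> int list \<Rightarrow> int list" where
  "redstep a [] = [a]"
| "redstep a (b # ys) = (if b = - a then ys else a # b # ys)"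

lemma red_Cons: "red (a # xs) = redstep a (red xs)"
  by (cases "red xs") auto

declare red.simps(2)[simp del]

lemma reduced_redstep: "reduced r \<Longrightarrow> reduced (redstep a r)"
  by (cases r) (auto dest: reduced_tl)

lemma reduced_red: "reduced (red xs)"
  by (induction xs) (auto simp: red_Cons reduced_redstep)

lemma red_reduced: "reduced xs \<Longrightarrow> red xs = xs"
proof (induction xs rule: induct_list012)
  case (3 a b l)
  then show ?case by (simp add: red_Cons[of a] del: redstep.simps) simp
qed (auto simp: red_Cons)

lemma red_red[simp]: "red (red xs) = red xs"
  by (rule red_reduced[OF reduced_red])

lemma set_redstep: "set (redstep a r) \<subseteq> insert a (set r)"
  by (cases r) auto

lemma set_red: "set (red xs) \<subseteq> set xs"
  by (induction xs) (use set_redstep in \<open>fastforce simp: red_Cons\<close>)+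

lemma redstep_inv: "reduced r \<Longrightarrow> redstep a (redstep (- a) r) = r"
proof (cases r)
  case (Cons c ys)
  assume r: "reduced r"
  show ?thesis
  proof (cases "c = a")
    case True
    then show ?thesis using r Cons by (cases ys) auto
  next
    case False
    then show ?thesis using Cons by auto
  qed
qed simp

lemma red_cancel_Cons: "red (a # - a # zs) = red zs"
  by (simp add: red_Cons redstep_inv[OF reduced_red] del: redstep.simps)

lemma red_append_right: "red (xs @ red ys) = red (xs @ ys)"
  by (induction xs) (auto simp: red_Cons)

lemma red_append_left: "red (red xs @ ys) = red (xs @ ys)"
proof (induction xs)
  case (Cons a xs)
  show ?case
  proof (cases "red xs")
    case Nil
    then have "red (xs @ ys) = red ys" using Cons.IH by simp
    then show ?thesis using Nil by (simp add: red_Cons)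
  next
    case (Cons b zs)
    show ?thesis
    proof (cases "b = - a")
      case True
      have "red ((a # xs) @ ys) = redstep a (red (red xs @ ys))"
        using Cons.IH by (simp add: red_Cons)
      also have "\<dots> = redstep a (red (b # zs @ ys))" using Cons by simp
      also have "\<dots> = red (a # b # zs @ ys)" by (simp add: red_Cons)
      also have "\<dots> = red (zs @ ys)" using True red_cancel_Cons[of a "zs @ ys"] by simp
      finally show ?thesis using Cons True by (simp add: red_Cons)
    next
      case False
      have "red ((a # xs) @ ys) = redstep a (red (red xs @ ys))"
        using Cons.IH by (simp add: red_Cons)
      then show ?thesis using Cons False by (simp add: red_Cons)
    qed
  qed
qed simp

lemma red_cancel: "red (xs @ a # - a # zs) = red (xs @ zs)"
  by (metis red_append_right red_cancel_Cons)

definition winv :: "int list \<Rightarrow> int list" where "winv x = rev (map uminus x)"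

abbreviation wpow :: "nat \<Rightarrow> int list \<Rightarrow> int list" where
  "wpow k v \<equiv> concat (replicate k v)"

lemma wpow_Suc_right: "wpow (Suc k) v = wpow k v @ v"
  by (induction k) auto

lemma winv_Cons: "winv (a # x) = winv x @ [- a]" by (simp add: winv_def)

lemma winv_append: "winv (x @ y) = winv y @ winv x" by (simp add: winv_def)

lemma winv_winv[simp]: "winv (winv x) = x" by (simp add: winv_def rev_map)

lemma length_winv[simp]: "length (winv x) = length x" by (simp add: winv_def)

lemma winv_Nil[simp]: "winv [] = []" by (simp add: winv_def)

lemma red_winv_self: "red (winv x @ x) = []"
proof (induction x)
  case (Cons a x)
  have "red (winv (a # x) @ a # x) = red (winv x @ - a # - (- a) # x)" by (simp add: winv_Cons)
  also have "\<dots> = red (winv x @ x)" by (rule red_cancel)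
  finally show ?case using Cons by simp
qed simp

lemma reduced_winv: "reduced x \<Longrightarrow> reduced (winv x)"
proof (induction x rule: induct_list012)
  case (3 a b l)
  then have "reduced (winv (b # l))" by simp
  moreover have "last (winv (b # l)) = - b" by (simp add: winv_def)
  ultimately show ?case using 3 by (simp add: winv_Cons[of a] reduced_append)
qed (auto simp: winv_def)

lemma red_cancel_inverse: "red (xs @ c @ winv c @ ys) = red (xs @ ys)"
proof (induction c arbitrary: xs ys)
  case (Cons a c)
  have "red (xs @ (a # c) @ winv (a # c) @ ys) = red ((xs @ [a]) @ c @ winv c @ ([- a] @ ys))"
    by (simp add: winv_Cons)
  also have "\<dots> = red (xs @ a # - a # ys)" using Cons.IH[of "xs @ [a]" "[- a] @ ys"] by simp
  also have "\<dots> = red (xs @ ys)" by (rule red_cancel)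
  finally show ?case .
qed simp

lemma red_append_split:
  "reduced h1 \<Longrightarrow> reduced h2 \<Longrightarrow> \<exists>x c y. h1 = x @ c \<and> h2 = winv c @ y \<and> red (h1 @ h2) = x @ y \<and> reduced (x @ y)"
proof (induction h1 arbitrary: h2 rule: rev_induct)
  case Nil
  then show ?case by (intro exI[of _ "[]"] exI[of _ "[]"] exI[of _ h2]) (simp add: red_reduced)
next
  case (snoc a h1)
  show ?case
  proof (cases h2)
    case Nil
    then show ?thesis using snoc.prems
      by (intro exI[of _ "h1 @ [a]"] exI[of _ "[]"] exI[of _ "[]"]) (simp add: red_reduced)
  next
    case (Cons b h2')
    show ?thesis
    proof (cases "b = - a")
      case True
      have r1: "reduced h1" using snoc.prems(1) by (rule reduced_prefix)
      have r2: "reduced h2'" using snoc.prems(2) Cons by (auto intro: reduced_tl)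
      obtain x c y where xcy: "h1 = x @ c" "h2' = winv c @ y" "red (h1 @ h2') = x @ y" "reduced (x @ y)"
        using snoc.IH[OF r1 r2] by blast
      have "red ((h1 @ [a]) @ h2) = red (h1 @ a # - a # h2')" using Cons True by simp
      also have "\<dots> = x @ y" using xcy red_cancel[of "x @ c" a "winv c @ y"] by simp
      finally show ?thesis using xcy Cons True
        by (intro exI[of _ x] exI[of _ "c @ [a]"] exI[of _ y]) (simp add: winv_append winv_def)
    next
      case False
      have "reduced ((h1 @ [a]) @ h2)" using snoc.prems Cons False by (simp add: reduced_append)
      then show ?thesis
        by (intro exI[of _ "h1 @ [a]"] exI[of _ "[]"] exI[of _ h2]) (simp add: red_reduced)
    qed
  qed
qed

lemma hd_wpow: "v \<noteq> [] \<Longrightarrow> k \<ge> 1 \<Longrightarrow> hd (wpow k v) = hd v"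
  by (cases k) auto

lemma last_wpow: "v \<noteq> [] \<Longrightarrow> k \<ge> 1 \<Longrightarrow> last (wpow k v) = last v"
  by (induction k) (auto simp: last_append)

lemma wpow_neq_Nil: "v \<noteq> [] \<Longrightarrow> k \<ge> 1 \<Longrightarrow> wpow k v \<noteq> []"
  by (cases k) auto

lemma reduced_wpow: "reduced v \<Longrightarrow> v \<noteq> [] \<Longrightarrow> hd v \<noteq> - last v \<Longrightarrow> reduced (wpow k v)"
proof (induction k)
  case (Suc k)
  have "wpow k v \<noteq> [] \<longrightarrow> hd (wpow k v) \<noteq> - last v"
  proof
    assume "wpow k v \<noteq> []"
    then have "k \<ge> 1" by (cases k) auto
    then show "hd (wpow k v) \<noteq> - last v" using hd_wpow[OF Suc.prems(2)] Suc.prems(3) by simp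
  qed
  then show ?case using Suc by (simp add: reduced_append)
qed simp

lemma wpow_add: "wpow (i + j) v = wpow i v @ wpow j v"
  by (simp add: replicate_add)

lemma length_wpow: "length (wpow k v) = k * length v"
  by (induction k) auto

lemma take_red_append:
  assumes "reduced x" "reduced y" "i + length y \<le> length x"
  shows "take i (red (x @ y)) = take i x"
proof -
  obtain x' c y' where split: "x = x' @ c" "y = winv c @ y'" "red (x @ y) = x' @ y'"
    using red_append_split[OF assms(1,2)] by blast
  have "i \<le> length x'" using assms(3) split(1,2) by simp
  then show ?thesis using split by simp
qed

section \<open>The free group\<close>

abbreviation FG :: "nat \<Rightarrow> int list monoid" where "FG n \<equiv> free_group n"

definition in_alphabet :: "nat \<Rightarrow> int list \<Rightarrow> bool" where
  "in_alphabet n xs \<longleftrightarrow> (\<forall>a\<in>set xs. a \<noteq> 0 \<and> \<bar>a\<bar> \<le> int n)"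

lemma carrier_free_group: "x \<in> carrier (FG n) \<longleftrightarrow> reduced x \<and> in_alphabet n x"
  by (simp add: free_group_def in_alphabet_def)

lemma mult_free_group[simp]: "x \<otimes>\<^bsub>FG n\<^esub> y = red (x @ y)"
  by (simp add: free_group_def)

lemma one_free_group[simp]: "\<one>\<^bsub>FG n\<^esub> = []"
  by (simp add: free_group_def)

lemma in_alphabet_append[simp]: "in_alphabet n (x @ y) \<longleftrightarrow> in_alphabet n x \<and> in_alphabet n y"
  by (auto simp: in_alphabet_def)

lemma in_alphabet_red: "in_alphabet n x \<Longrightarrow> in_alphabet n (red x)"
  using set_red[of x] by (auto simp: in_alphabet_def)

lemma in_alphabet_winv: "in_alphabet n x \<Longrightarrow> in_alphabet n (winv x)"
  by (auto simp: in_alphabet_def winv_def)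

lemma group_free_group: "group (FG n)"
proof (rule groupI)
  fix x y z assume x: "x \<in> carrier (FG n)" and y: "y \<in> carrier (FG n)" and z: "z \<in> carrier (FG n)"
  show "x \<otimes>\<^bsub>FG n\<^esub> y \<in> carrier (FG n)"
    using x y by (simp add: carrier_free_group reduced_red in_alphabet_red)
  show "x \<otimes>\<^bsub>FG n\<^esub> y \<otimes>\<^bsub>FG n\<^esub> z = x \<otimes>\<^bsub>FG n\<^esub> (y \<otimes>\<^bsub>FG n\<^esub> z)"
    by (simp add: red_append_left red_append_right)
next
  show "\<one>\<^bsub>FG n\<^esub> \<in> carrier (FG n)" by (simp add: carrier_free_group in_alphabet_def)
next
  fix x assume x: "x \<in> carrier (FG n)"
  then show "\<one>\<^bsub>FG n\<^esub> \<otimes>\<^bsub>FG n\<^esub> x = x" by (simp add: carrier_free_group red_reduced)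
  show "\<exists>y\<in>carrier (FG n). y \<otimes>\<^bsub>FG n\<^esub> x = \<one>\<^bsub>FG n\<^esub>"
    using x
    by (intro bexI[of _ "winv x"]) (auto simp: carrier_free_group red_winv_self reduced_winv in_alphabet_winv)
qed

interpretation FG: group "FG n" by (rule group_free_group)

lemma inv_free_group: "x \<in> carrier (FG n) \<Longrightarrow> inv\<^bsub>FG n\<^esub> x = winv x"
  by (rule FG.inv_equality) (auto simp: carrier_free_group red_winv_self reduced_winv in_alphabet_winv)

lemma pow_free_group: "x \<in> carrier (FG n) \<Longrightarrow> x [^]\<^bsub>FG n\<^esub> (k::nat) = red (wpow k x)"
proof (induction k)
  case 0 then show ?case by simp
next
  case (Suc k)
  have "x [^]\<^bsub>FG n\<^esub> Suc k = red (red (wpow k x) @ x)" using Suc by simp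
  also have "\<dots> = red (wpow (Suc k) x)"
    by (simp only: red_append_left wpow_Suc_right)
  finally show ?case .
qed

definition target :: "int list \<Rightarrow> int list \<Rightarrow> nat \<Rightarrow> int list" where
  "target u w k = red (wpow k w @ winv u)"

lemma target_free_group: "u \<in> carrier (FG n) \<Longrightarrow> w \<in> carrier (FG n) \<Longrightarrow>
   target u w k = w [^]\<^bsub>FG n\<^esub> k \<otimes>\<^bsub>FG n\<^esub> inv\<^bsub>FG n\<^esub> u"
  by (simp add: target_def pow_free_group inv_free_group red_append_left winv_def)

lemma take_carrier: "h \<in> carrier (FG n) \<Longrightarrow> take i h \<in> carrier (FG n)"
  by (metis append_take_drop_id carrier_free_group reduced_prefix in_alphabet_append)

section \<open>Membership certificates\<close>

(* The code e of a pair (i, s) selects the i-th generator, inverted unless s = 0; an index out of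
   range selects the empty word. *)
definition gen_select :: "int list list \<Rightarrow> nat \<Rightarrow> int list" where
  "gen_select gs e = (let h = (if pfst e < length gs then gs ! pfst e else []) in
     if psnd e = 0 then h else winv h)"

lemma gen_select_mem: "set gs \<subseteq> carrier (FG n) \<Longrightarrow> gen_select gs e \<in> generate (FG n) (set gs)"
proof -
  assume gs: "set gs \<subseteq> carrier (FG n)"
  show ?thesis
  proof (cases "pfst e < length gs")
    case True
    then have m: "gs ! pfst e \<in> set gs" by simp
    show ?thesis
    proof (cases "psnd e = 0")
      case True then show ?thesis
        using m by (simp add: gen_select_def Let_def \<open>pfst e < length gs\<close> generate.incl)
    next
      case False
      have "inv\<^bsub>FG n\<^esub> (gs ! pfst e) \<in> generate (FG n) (set gs)" using m by (rule generate.inv)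
      then show ?thesis
        using False m gs
        by (simp add: gen_select_def Let_def \<open>pfst e < length gs\<close> inv_free_group subsetD winv_def)
    qed
  next
    case False
    then have "gen_select gs e = \<one>\<^bsub>FG n\<^esub>" by (simp add: gen_select_def Let_def winv_def)
    then show ?thesis using generate.one[of "FG n" "set gs"] by simp
  qed
qed

definition member_cert :: "int list list \<Rightarrow> nat list \<Rightarrow> int list \<Rightarrow> bool" where
  "member_cert gs es g \<longleftrightarrow> red (concat (map (gen_select gs) es)) = g"

lemma member_cert_sound:
  assumes gs: "set gs \<subseteq> carrier (FG n)" and "member_cert gs es g"
  shows "g \<in> generate (FG n) (set gs)"
proof -
  have "red (concat (map (gen_select gs) es)) \<in> generate (FG n) (set gs)"
  proof (induction es)
    case Nil then show ?case using generate.one[of "FG n"] by simp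
  next
    case (Cons e es)
    have "gen_select gs e \<otimes>\<^bsub>FG n\<^esub> red (concat (map (gen_select gs) es)) \<in> generate (FG n) (set gs)"
      by (rule generate.eng[OF gen_select_mem[OF gs] Cons.IH])
    then show ?case by (simp add: red_append_right)
  qed
  then show ?thesis using assms(2) by (simp add: member_cert_def)
qed

lemma member_cert_complete:
  assumes gs: "set gs \<subseteq> carrier (FG n)" and h: "h \<in> generate (FG n) (set gs)"
  shows "\<exists>es. member_cert gs es h"
  using h unfolding member_cert_def
proof induction
  case one then show ?case by (intro exI[of _ "[]"]) simp
next
  case (incl h)
  then obtain i where i: "i < length gs" "h = gs ! i" by (auto simp: in_set_conv_nth)
  have "gen_select gs (pair i 0) = h" using i by (simp add: gen_select_def)
  moreover have "red h = h" using incl gs by (auto simp: carrier_free_group red_reduced)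
  ultimately show ?case by (intro exI[of _ "[pair i 0]"]) simp
next
  case (inv h)
  then obtain i where i: "i < length gs" "h = gs ! i" by (auto simp: in_set_conv_nth)
  have hc: "h \<in> carrier (FG n)" using inv gs by auto
  have "gen_select gs (pair i 1) = winv h" using i by (simp add: gen_select_def)
  moreover have "red (winv h) = winv h"
    using hc by (auto simp: carrier_free_group red_reduced reduced_winv)
  ultimately show ?case using hc by (intro exI[of _ "[pair i 1]"]) (simp add: inv_free_group)
next
  case (eng h1 h2)
  then obtain es1 es2 where "h1 = red (concat (map (gen_select gs) es1))" "h2 = red (concat (map (gen_select gs) es2))"
    by metis
  then show ?case
    by (intro exI[of _ "es1 @ es2"]) (simp add: red_append_left red_append_right)
qed

section \<open>Non-membership certificates\<close>

type_synonym edge = "nat \<times> int \<times> nat"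

fun lookup :: "edge list \<Rightarrow> nat \<Rightarrow> int \<Rightarrow> nat option" where
  "lookup [] s a = None"
| "lookup ((s', a', t) # L) s a = (if s' = s \<and> a' = a then Some t else lookup L s a)"

fun follow :: "edge list \<Rightarrow> nat \<Rightarrow> int list \<Rightarrow> nat option" where
  "follow L s [] = Some s"
| "follow L s (a # w) = (case lookup L s a of None \<Rightarrow> None | Some t \<Rightarrow> follow L t w)"

definition edges_symmetric :: "edge list \<Rightarrow> bool" where
  "edges_symmetric L \<longleftrightarrow> (\<forall>s a t. (s, a, t) \<in> set L \<longrightarrow> (t, -a, s) \<in> set L)"

definition edges_deterministic :: "edge list \<Rightarrow> bool" where
  "edges_deterministic L \<longleftrightarrow> (\<forall>s a t t'. (s, a, t) \<in> set L \<longrightarrow> (s, a, t') \<in> set L \<longrightarrow> t = t')"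

definition nonmember_cert :: "int list list \<Rightarrow> edge list \<Rightarrow> int list \<Rightarrow> bool" where
  "nonmember_cert gs L g \<longleftrightarrow> edges_symmetric L \<and> edges_deterministic L \<and>
     (\<forall>h\<in>set gs. follow L 0 h = Some 0) \<and> follow L 0 g \<noteq> Some 0"

lemma follow_append:
  "follow L s (x @ y) = (case follow L s x of None \<Rightarrow> None | Some t \<Rightarrow> follow L t y)"
  by (induction x arbitrary: s) (auto split: option.splits)

lemma lookup_in: "lookup L s a = Some t \<Longrightarrow> (s, a, t) \<in> set L"
  by (induction L s a rule: lookup.induct) (auto split: if_splits)

lemma lookup_det: "edges_deterministic L \<Longrightarrow> (s, a, t) \<in> set L \<Longrightarrow> lookup L s a = Some t"
proof (induction L s a rule: lookup.induct)
  case (2 s' a' t' L s a)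
  then show ?case by (auto simp: edges_deterministic_def)
qed simp

lemma lookup_back:
  "edges_symmetric L \<Longrightarrow> edges_deterministic L \<Longrightarrow> lookup L s a = Some t \<Longrightarrow> lookup L t (- a) = Some s"
  by (meson edges_symmetric_def lookup_det lookup_in)

lemma follow_red:
  assumes sym: "edges_symmetric L" and det: "edges_deterministic L"
  shows "follow L s xs = Some t \<Longrightarrow> follow L s (red xs) = Some t"
proof (induction xs arbitrary: s)
  case (Cons a xs)
  obtain s1 where s1: "lookup L s a = Some s1" "follow L s1 xs = Some t"
    using Cons.prems by (auto split: option.splits)
  have IH: "follow L s1 (red xs) = Some t" using Cons.IH[OF s1(2)] .
  show ?case
  proof (cases "red xs")
    case Nil then show ?thesis using s1 IH by (simp add: red_Cons)
  next
    case (Cons b ys)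
    show ?thesis
    proof (cases "b = - a")
      case True
      have bk: "lookup L s1 (- a) = Some s" by (rule lookup_back[OF sym det s1(1)])
      have "follow L s ys = Some t" using IH Cons True bk by simp
      then show ?thesis using Cons True by (simp add: red_Cons)
    next
      case False
      then show ?thesis using Cons s1 IH by (simp add: red_Cons)
    qed
  qed
qed simp

lemma follow_winv:
  assumes sym: "edges_symmetric L" and det: "edges_deterministic L"
  shows "follow L s x = Some t \<Longrightarrow> follow L t (winv x) = Some s"
proof (induction x arbitrary: s)
  case (Cons a x)
  obtain s1 where s1: "lookup L s a = Some s1" "follow L s1 x = Some t"
    using Cons.prems by (auto split: option.splits)
  have "follow L t (winv x) = Some s1" by (rule Cons.IH[OF s1(2)])
  then show ?case using lookup_back[OF sym det s1(1)] by (simp add: winv_Cons follow_append)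
qed simp

lemma nonmember_cert_sound:
  assumes gs: "set gs \<subseteq> carrier (FG n)" and nm: "nonmember_cert gs L g"
  shows "g \<notin> generate (FG n) (set gs)"
proof
  have sym: "edges_symmetric L" and det: "edges_deterministic L" and loops: "\<forall>h\<in>set gs. follow L 0 h = Some 0"
    using nm by (auto simp: nonmember_cert_def)
  assume "g \<in> generate (FG n) (set gs)"
  then have "follow L 0 g = Some 0"
  proof induction
    case one then show ?case by simp
  next
    case (incl h) then show ?case using loops by simp
  next
    case (inv h)
    then have "inv\<^bsub>FG n\<^esub> h = winv h" using gs by (auto simp: inv_free_group)
    then show ?case using follow_winv[OF sym det, of 0 h 0] loops inv by simp
  next
    case (eng h1 h2)
    then have "follow L 0 (h1 @ h2) = Some 0" by (simp add: follow_append)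
    then show ?case using follow_red[OF sym det] by simp
  qed
  then show False using nm by (simp add: nonmember_cert_def)
qed

abbreviation coset :: "nat \<Rightarrow> int list set \<Rightarrow> int list \<Rightarrow> int list set" where
  "coset n H p \<equiv> H #>\<^bsub>FG n\<^esub> p"

definition letters :: "nat \<Rightarrow> int list" where
  "letters n = filter (\<lambda>a. a \<noteq> 0) [- int n..int n]"

lemma letters_iff: "a \<in> set (letters n) \<longleftrightarrow> a \<noteq> 0 \<and> \<bar>a\<bar> \<le> int n"
  by (auto simp: letters_def)

lemma letter_carrier: "a \<in> set (letters n) \<Longrightarrow> [a] \<in> carrier (FG n)"
  by (auto simp: carrier_free_group in_alphabet_def letters_iff)

definition coset_index :: "nat \<Rightarrow> int list set \<Rightarrow> int list list \<Rightarrow> int list set \<Rightarrow> nat" where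
  "coset_index n H reps Z = (LEAST i. i < length reps \<and> coset n H (reps ! i) = Z)"

(* The Schreier graph of H restricted to the cosets of the words in reps, each coset being
   numbered by the position of its first representative. *)
definition schreier_edges :: "nat \<Rightarrow> int list set \<Rightarrow> int list list \<Rightarrow> edge list" where
  "schreier_edges n H reps =
     [(coset_index n H reps (coset n H p), a, coset_index n H reps (coset n H (red (p @ [a])))).
     p \<leftarrow> reps, a \<leftarrow> letters n, \<exists>q\<in>set reps. coset n H q = coset n H (red (p @ [a]))]"

locale schreier =
  fixes n :: nat and H :: "int list set" and reps :: "int list list"
  assumes subgroup: "subgroup H (FG n)"
    and reps_ne: "reps \<noteq> []" and reps_0: "reps ! 0 = []" and reps_carrier: "set reps \<subseteq> carrier (FG n)"
begin

abbreviation is_state :: "int list set \<Rightarrow> bool" where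
  "is_state Z \<equiv> \<exists>q\<in>set reps. coset n H q = Z"

abbreviation "idx \<equiv> coset_index n H reps"

abbreviation "L \<equiv> schreier_edges n H reps"

lemma H_carrier: "H \<subseteq> carrier (FG n)"
  using subgroup by (rule subgroup.subset)

lemma coset_Nil: "coset n H [] = H"
  using FG.coset_mult_one[OF H_carrier] by simp

lemma coset_red_append:
  "p \<in> carrier (FG n) \<Longrightarrow> x \<in> carrier (FG n) \<Longrightarrow> coset n H (red (p @ x)) = coset n H p #>\<^bsub>FG n\<^esub> x"
  using FG.coset_mult_assoc[OF H_carrier] by simp

lemma coset_index_spec: "is_state Z \<Longrightarrow> idx Z < length reps \<and> coset n H (reps ! idx Z) = Z"
proof -
  assume "is_state Z"
  then obtain i where "i < length reps \<and> coset n H (reps ! i) = Z" by (auto simp: in_set_conv_nth)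
  from LeastI[where P="\<lambda>i. i < length reps \<and> coset n H (reps ! i) = Z", OF this]
  show ?thesis unfolding coset_index_def .
qed

lemma coset_index_inj: "is_state Z \<Longrightarrow> is_state Y \<Longrightarrow> idx Z = idx Y \<Longrightarrow> Z = Y"
  by (metis coset_index_spec)

lemma is_state_subgroup: "is_state H"
  using reps_ne reps_0 coset_Nil by (metis length_greater_0_conv nth_mem)

lemma coset_index_subgroup: "idx H = 0"
  unfolding coset_index_def using reps_ne reps_0 coset_Nil by (intro Least_equality) auto

lemma mem_schreier_edges:
  "(s, a, t) \<in> set L \<longleftrightarrow> (\<exists>p\<in>set reps. a \<in> set (letters n) \<and> is_state (coset n H (red (p @ [a]))) \<and>
    s = idx (coset n H p) \<and> t = idx (coset n H (red (p @ [a]))))"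
  unfolding schreier_edges_def by auto

lemma red_snoc_carrier: "p \<in> carrier (FG n) \<Longrightarrow> a \<in> set (letters n) \<Longrightarrow> red (p @ [a]) \<in> carrier (FG n)"
  using FG.m_closed[OF _ letter_carrier] by simp

lemma schreier_deterministic: "edges_deterministic L"
  unfolding edges_deterministic_def
proof (intro allI impI)
  fix s a t t' assume "(s, a, t) \<in> set L" "(s, a, t') \<in> set L"
  then obtain p p' where
      p: "p \<in> set reps" "a \<in> set (letters n)" "s = idx (coset n H p)" "t = idx (coset n H (red (p @ [a])))"
    and p': "p' \<in> set reps" "s = idx (coset n H p')" "t' = idx (coset n H (red (p' @ [a])))"
    by (auto simp: mem_schreier_edges)
  have "coset n H p = coset n H p'" using coset_index_inj p p' by blast
  then show "t = t'" using p p' reps_carrier coset_red_append letter_carrier by (metis subsetD)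
qed

lemma schreier_symmetric: "edges_symmetric L"
  unfolding edges_symmetric_def
proof (intro allI impI)
  fix s a t assume "(s, a, t) \<in> set L"
  then obtain p q where
      p: "p \<in> set reps" "a \<in> set (letters n)" "s = idx (coset n H p)" "t = idx (coset n H (red (p @ [a])))"
    and q: "q \<in> set reps" "coset n H q = coset n H (red (p @ [a]))"
    by (auto simp: mem_schreier_edges)
  have pc: "p \<in> carrier (FG n)" and qc: "q \<in> carrier (FG n)" using p q reps_carrier by auto
  have ma: "- a \<in> set (letters n)" using p by (auto simp: letters_iff)
  have "coset n H (red (q @ [- a])) = coset n H q #>\<^bsub>FG n\<^esub> [- a]"
    by (rule coset_red_append[OF qc letter_carrier[OF ma]])
  also have "\<dots> = coset n H (red (p @ [a])) #>\<^bsub>FG n\<^esub> [- a]" using q by simp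
  also have "\<dots> = coset n H (red (red (p @ [a]) @ [- a]))"
    by (rule coset_red_append[symmetric, OF red_snoc_carrier[OF pc p(2)] letter_carrier[OF ma]])
  also have "red (red (p @ [a]) @ [- a]) = p"
    using red_cancel[of p a "[]"] pc by (simp add: red_append_left carrier_free_group red_reduced)
  finally have e: "coset n H (red (q @ [- a])) = coset n H p" .
  show "(t, - a, s) \<in> set L"
    unfolding mem_schreier_edges using q p ma e by (intro bexI[of _ q]) auto
qed

lemma follow_schreier_complete:
  "p \<in> carrier (FG n) \<Longrightarrow> is_state (coset n H p) \<Longrightarrow> in_alphabet n x \<Longrightarrow>
   (\<forall>j\<le>length x. is_state (coset n H (red (p @ take j x)))) \<Longrightarrow>
   follow L (idx (coset n H p)) x = Some (idx (coset n H (red (p @ x))))"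
proof (induction x arbitrary: p)
  case Nil
  then show ?case using FG.coset_mult_one by (simp add: carrier_free_group red_reduced)
next
  case (Cons a x)
  have a: "a \<in> set (letters n)" using Cons.prems(3) by (auto simp: in_alphabet_def letters_iff)
  obtain q where q: "q \<in> set reps" "coset n H q = coset n H p" using Cons.prems(2) by auto
  have qc: "q \<in> carrier (FG n)" using q reps_carrier by auto
  have e1: "coset n H (red (q @ [a])) = coset n H (red (p @ [a]))"
    using coset_red_append[OF qc letter_carrier[OF a]] coset_red_append[OF Cons.prems(1) letter_carrier[OF a]] q
    by simp
  have in1: "is_state (coset n H (red (p @ [a])))" using Cons.prems(4)[rule_format, of 1] by simp
  have "(idx (coset n H p), a, idx (coset n H (red (p @ [a])))) \<in> set L"
    unfolding mem_schreier_edges using q a e1 in1 by (intro bexI[of _ q]) auto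
  then have lk: "lookup L (idx (coset n H p)) a = Some (idx (coset n H (red (p @ [a]))))"
    by (rule lookup_det[OF schreier_deterministic])
  have IH: "follow L (idx (coset n H (red (p @ [a])))) x = Some (idx (coset n H (red (red (p @ [a]) @ x))))"
  proof (rule Cons.IH)
    show "red (p @ [a]) \<in> carrier (FG n)" by (rule red_snoc_carrier[OF Cons.prems(1) a])
    show "is_state (coset n H (red (p @ [a])))" by (rule in1)
    show "in_alphabet n x" using Cons.prems(3) by (auto simp: in_alphabet_def)
    show "\<forall>j\<le>length x. is_state (coset n H (red (red (p @ [a]) @ take j x)))"
    proof (intro allI impI)
      fix j assume "j \<le> length x"
      then have "is_state (coset n H (red (p @ take (Suc j) (a # x))))"
        using Cons.prems(4)[rule_format, of "Suc j"] by simp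
      then show "is_state (coset n H (red (red (p @ [a]) @ take j x)))"
        by (simp add: red_append_left)
    qed
  qed
  then show ?case using lk by (simp add: red_append_left)
qed

lemma follow_schreier_sound:
  "p \<in> carrier (FG n) \<Longrightarrow> is_state (coset n H p) \<Longrightarrow> follow L (idx (coset n H p)) x = Some t \<Longrightarrow>
   is_state (coset n H (red (p @ x))) \<and> t = idx (coset n H (red (p @ x)))"
proof (induction x arbitrary: p)
  case Nil
  then show ?case using FG.coset_mult_one by (simp add: carrier_free_group red_reduced)
next
  case (Cons a x)
  obtain s1 where s1: "lookup L (idx (coset n H p)) a = Some s1" "follow L s1 x = Some t"
    using Cons.prems(3) by (auto split: option.splits)
  from lookup_in[OF s1(1)] obtain q where q: "q \<in> set reps" "a \<in> set (letters n)"
    "is_state (coset n H (red (q @ [a])))" "idx (coset n H p) = idx (coset n H q)"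
    "s1 = idx (coset n H (red (q @ [a])))"
    unfolding mem_schreier_edges by blast
  have qc: "q \<in> carrier (FG n)" using q reps_carrier by auto
  have "coset n H q = coset n H p" using coset_index_inj q Cons.prems(2) by metis
  then have e1: "coset n H (red (q @ [a])) = coset n H (red (p @ [a]))"
    using coset_red_append[OF qc letter_carrier[OF q(2)]] coset_red_append[OF Cons.prems(1) letter_carrier[OF q(2)]]
    by simp
  have "is_state (coset n H (red (red (p @ [a]) @ x))) \<and> t = idx (coset n H (red (red (p @ [a]) @ x)))"
    by (rule Cons.IH[OF red_snoc_carrier[OF Cons.prems(1) q(2)]]) (use q e1 s1 in auto)
  then show ?case by (simp add: red_append_left)
qed

lemma schreier_loop_imp_mem:
  assumes g: "g \<in> carrier (FG n)" and loop: "follow L 0 g = Some 0"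
  shows "g \<in> H"
proof -
  have "follow L (idx (coset n H [])) g = Some 0"
    using loop by (simp add: coset_Nil coset_index_subgroup)
  from follow_schreier_sound[OF _ _ this] have "is_state (coset n H g)" "0 = idx (coset n H g)"
    using FG.one_closed is_state_subgroup g by (auto simp: coset_Nil carrier_free_group red_reduced)
  then have "coset n H g = H" using coset_index_inj is_state_subgroup coset_index_subgroup by metis
  then show ?thesis using FG.rcos_self[OF g subgroup] by simp
qed

lemma schreier_loop_of_mem:
  assumes h: "h \<in> H" and prefixes: "\<And>j. j \<le> length h \<Longrightarrow> take j h \<in> set reps"
  shows "follow L 0 h = Some 0"
proof -
  have h_carrier: "h \<in> carrier (FG n)" using h H_carrier by auto
  have "follow L (idx (coset n H [])) h = Some (idx (coset n H (red ([] @ h))))"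
  proof (rule follow_schreier_complete)
    show "[] \<in> carrier (FG n)" using FG.one_closed by simp
    show "is_state (coset n H [])" using is_state_subgroup by (simp add: coset_Nil)
    show "in_alphabet n h" using h_carrier by (simp add: carrier_free_group)
    show "\<forall>j\<le>length h. is_state (coset n H (red ([] @ take j h)))"
    proof (intro allI impI)
      fix j assume "j \<le> length h"
      then have "take j h \<in> set reps" by (rule prefixes)
      moreover have "red (take j h) = take j h"
        using take_carrier[OF h_carrier] by (simp add: carrier_free_group red_reduced)
      ultimately show "is_state (coset n H (red ([] @ take j h)))" by auto
    qed
  qed
  moreover have "coset n H h = H" by (rule FG.coset_join2[OF h_carrier subgroup h])
  ultimately show ?thesis
    using h_carrier by (simp add: coset_Nil coset_index_subgroup carrier_free_group red_reduced)
qed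

end

definition gen_prefixes :: "int list list \<Rightarrow> int list list" where
  "gen_prefixes gs = [] # concat (map (\<lambda>h. map (\<lambda>i. take i h) [0..<Suc (length h)]) (gs @ map winv gs))"

lemma take_mem_gen_prefixes:
  assumes h: "h \<in> set gs \<union> winv ` set gs"
  shows "take j h \<in> set (gen_prefixes gs)"
proof -
  define f where "f = (\<lambda>h::int list. map (\<lambda>i. take i h) [0..<Suc (length h)])"
  have "take j h \<in> set (f h)"
    by (cases "j \<le> length h") (auto simp: f_def image_iff intro: bexI[of _ "length h"])
  moreover have "f h \<in> set (map f (gs @ map winv gs))" using h by auto
  ultimately have "take j h \<in> \<Union> (set ` set (map f (gs @ map winv gs)))" by blast
  then show ?thesis unfolding gen_prefixes_def f_def[symmetric] by simp
qed

lemma gen_prefixes_carrier: "set gs \<subseteq> carrier (FG n) \<Longrightarrow> set (gen_prefixes gs) \<subseteq> carrier (FG n)"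
proof -
  assume gs: "set gs \<subseteq> carrier (FG n)"
  have "winv h \<in> carrier (FG n)" if "h \<in> set gs" for h
    using that gs by (auto simp: carrier_free_group reduced_winv in_alphabet_winv)
  then show ?thesis using gs FG.one_closed by (auto simp: gen_prefixes_def intro!: take_carrier)
qed

lemma nonmember_cert_complete:
  assumes gs: "set gs \<subseteq> carrier (FG n)" and g: "g \<in> carrier (FG n)"
    and not_mem: "g \<notin> generate (FG n) (set gs)"
  shows "\<exists>L. nonmember_cert gs L g"
proof -
  interpret S: schreier n "generate (FG n) (set gs)" "gen_prefixes gs"
    by (rule schreier.intro[OF FG.generate_is_subgroup[OF gs] _ _ gen_prefixes_carrier[OF gs]])
      (simp_all add: gen_prefixes_def)
  have "follow S.L 0 h = Some 0" if "h \<in> set gs" for h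
    using S.schreier_loop_of_mem[OF generate.incl[OF that]] take_mem_gen_prefixes that by blast
  moreover have "follow S.L 0 g \<noteq> Some 0" using S.schreier_loop_imp_mem[OF g] not_mem by blast
  ultimately show ?thesis
    using S.schreier_symmetric S.schreier_deterministic unfolding nonmember_cert_def by blast
qed

section \<open>Bounding the order\<close>

(* |u| plus the number of prefixes of generators and their inverses, see length_gen_prefixes *)
definition order_bound :: "int list list \<Rightarrow> int list \<Rightarrow> nat" where
  "order_bound gs u = length u + 2 * sum_list (map (\<lambda>g. length g + 1) gs) + 1"

lemma coset_take_red_append:
  assumes H: "subgroup H (FG n)" and h1: "h1 \<in> H" and h2: "h2 \<in> carrier (FG n)"
  shows "(\<exists>i. take j (red (h1 @ h2)) = take i h1) \<or>
    (\<exists>i. coset n H (take j (red (h1 @ h2))) = coset n H (take i h2))"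
proof (cases "j \<le> length (red (h1 @ h2))")
  case False
  then have "take j (red (h1 @ h2)) = red (h1 @ take (length h2) h2)" by simp
  then have "coset n H (take j (red (h1 @ h2))) = coset n H h1 #>\<^bsub>FG n\<^esub> take (length h2) h2"
    using FG.coset_mult_assoc[OF subgroup.subset[OF H] subgroup.mem_carrier[OF H h1] h2] by simp
  then have "coset n H (take j (red (h1 @ h2))) = coset n H (take (length h2) h2)"
    using FG.coset_join2[OF subgroup.mem_carrier[OF H h1] H h1] by simp
  then show ?thesis by blast
next
  case True
  have c1: "h1 \<in> carrier (FG n)" by (rule subgroup.mem_carrier[OF H h1])
  obtain x c y where xcy: "h1 = x @ c" "h2 = winv c @ y" "red (h1 @ h2) = x @ y" "reduced (x @ y)"
    using red_append_split[of h1 h2] c1 h2 by (auto simp: carrier_free_group)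
  show ?thesis
  proof (cases "j \<le> length x")
    case True
    then have "take j (red (h1 @ h2)) = take j h1" using xcy by simp
    then show ?thesis by blast
  next
    case False
    define i where "i = j - length x"
    have take_j: "take j (red (h1 @ h2)) = x @ take i y" using xcy False i_def by simp
    have "reduced (x @ take i y)" using reduced_prefix[of "x @ take i y" "drop i y"] xcy(4) by simp
    moreover have "take (length c + i) h2 = winv c @ take i y" using xcy by simp
    ultimately have "x @ take i y = red (h1 @ take (length c + i) h2)"
      using xcy red_cancel_inverse[of x c "take i y"] by (simp add: red_reduced)
    then have "coset n H (x @ take i y) = coset n H h1 #>\<^bsub>FG n\<^esub> take (length c + i) h2"
      using FG.coset_mult_assoc[OF subgroup.subset[OF H] c1 take_carrier[OF h2]] by simp
    also have "coset n H h1 = H" by (rule FG.coset_join2[OF c1 H h1])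
    finally show ?thesis using take_j by auto
  qed
qed

lemma prefix_coset_gen_prefixes:
  assumes gs: "set gs \<subseteq> carrier (FG n)" and h: "h \<in> generate (FG n) (set gs)"
  shows "\<exists>q\<in>set (gen_prefixes gs).
    coset n (generate (FG n) (set gs)) (take j h) = coset n (generate (FG n) (set gs)) q"
  using h
proof (induction arbitrary: j)
  case one
  then show ?case by (auto simp: gen_prefixes_def)
next
  case (incl h)
  then show ?case using take_mem_gen_prefixes[of h gs] by blast
next
  case (inv h)
  then have "inv\<^bsub>FG n\<^esub> h = winv h" using gs by (auto simp: inv_free_group)
  then show ?case using take_mem_gen_prefixes[of "winv h" gs] inv by auto
next
  case (eng h1 h2)
  have "h2 \<in> carrier (FG n)"
    by (rule subgroup.mem_carrier[OF FG.generate_is_subgroup[OF gs] eng.hyps(2)])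
  then show ?case
    using coset_take_red_append[OF FG.generate_is_subgroup[OF gs] eng.hyps(1), of h2 j] eng.IH
    by auto
qed

lemma cyclic_reduction_exists:
  "reduced w \<Longrightarrow> in_alphabet n w \<Longrightarrow> \<exists>c v. w = c @ v @ winv c \<and> reduced v \<and>
     (v \<noteq> [] \<longrightarrow> hd v \<noteq> - last v) \<and> (v = [] \<longrightarrow> c = [])"
proof (induction "length w" arbitrary: w rule: less_induct)
  case less
  show ?case
  proof (cases "length w \<le> 1")
    case True
    then consider "w = []" | a where "w = [a]" by (cases w) auto
    then show ?thesis
    proof cases
      case 1 then show ?thesis by (intro exI[of _ "[]"]) simp
    next
      case 2 then have "a \<noteq> 0" using less.prems(2) by (simp add: in_alphabet_def)
      then show ?thesis using 2 by (intro exI[of _ "[]"] exI[of _ "[a]"]) simp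
    qed
  next
    case False
    obtain a w1 where w1: "w = a # w1" using False by (cases w) auto
    then have "w1 \<noteq> []" using False by auto
    then obtain w' b where "w1 = w' @ [b]" by (cases w1 rule: rev_cases) auto
    then have w: "w = a # w' @ [b]" using w1 by simp
    show ?thesis
    proof (cases "b = - a")
      case True
      have rw': "reduced w'" using less.prems(1) w by (metis reduced_prefix reduced_tl)
      have aw': "in_alphabet n w'" using less.prems(2) w by (simp add: in_alphabet_def)
      obtain c v where cv: "w' = c @ v @ winv c" "reduced v" "v \<noteq> [] \<longrightarrow> hd v \<noteq> - last v" "v = [] \<longrightarrow> c = []"
        using less.hyps[of w'] rw' aw' w by auto
      have "v \<noteq> []"
      proof
        assume "v = []"
        then have "w = [a, - a]" using cv w True by simp
        then show False using less.prems(1) by simp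
      qed
      then show ?thesis using cv w True
        by (intro exI[of _ "a # c"] exI[of _ v]) (simp add: winv_Cons)
    next
      case False
      then show ?thesis using less.prems w by (intro exI[of _ "[]"] exI[of _ w]) auto
    qed
  qed
qed

locale cyclic_reduction =
  fixes w c v :: "int list"
  assumes w_eq: "w = c @ v @ winv c" and reduced_w: "reduced w" and reduced_v: "reduced v"
    and v_ne: "v \<noteq> []" and cyclic: "hd v \<noteq> - last v"
begin

lemma reduced_c: "reduced c" using reduced_w w_eq reduced_prefix by blast

lemma reduced_conj_wpow: "k \<ge> 1 \<Longrightarrow> reduced (c @ wpow k v @ winv c)"
proof -
  assume k: "k \<ge> 1"
  have r1: "reduced (v @ winv c)" using reduced_w w_eq by (metis reduced_suffix)
  have r2: "reduced (c @ v @ winv c)" using reduced_w w_eq by simp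
  have "reduced (wpow k v @ winv c)"
    using r1 reduced_wpow[OF reduced_v v_ne cyclic, of k] last_wpow[OF v_ne k] wpow_neq_Nil[OF v_ne k]
    by (simp add: reduced_append)
  moreover have "c \<noteq> [] \<longrightarrow> hd (wpow k v @ winv c) \<noteq> - last c"
    using r2 hd_wpow[OF v_ne k] wpow_neq_Nil[OF v_ne k] v_ne by (simp add: reduced_append)
  ultimately show ?thesis using reduced_c wpow_neq_Nil[OF v_ne k] by (simp add: reduced_append)
qed

lemma red_wpow: "k \<ge> 1 \<Longrightarrow> red (wpow k w) = c @ wpow k v @ winv c"
proof (induction k rule: dec_induct[where i=1])
  case base
  then show ?case using reduced_w w_eq by (simp add: red_reduced)
next
  case (step k)
  have "red (wpow (Suc k) w) = red (w @ red (wpow k w))"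
    by (simp add: red_append_right)
  also have "\<dots> = red ((c @ v) @ winv c @ winv (winv c) @ (wpow k v @ winv c))"
    using step w_eq by simp
  also have "\<dots> = red ((c @ v) @ wpow k v @ winv c)" by (rule red_cancel_inverse)
  also have "\<dots> = red (c @ wpow (Suc k) v @ winv c)" by simp
  also have "\<dots> = c @ wpow (Suc k) v @ winv c"
    using reduced_conj_wpow[of "Suc k"] by (simp add: red_reduced)
  finally show ?case .
qed

end

lemma length_gen_prefixes: "length (gen_prefixes gs) = 2 * sum_list (map (\<lambda>g. length g + 1) gs) + 1"
proof -
  have "length (gen_prefixes gs) = 1 + sum_list (map (\<lambda>g. length g + 1) (gs @ map winv gs))"
    by (simp add: gen_prefixes_def length_concat comp_def)
  also have "\<dots> = 1 + 2 * sum_list (map (\<lambda>g. length g + 1) gs)"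
    by (simp add: comp_def)
  finally show ?thesis by simp
qed

lemma (in group) pow_diff_mult_inv_mem:
  fixes d k :: nat
  assumes H: "subgroup H G" and w: "w \<in> carrier G" and u: "u \<in> carrier G" and "d \<le> k"
    and "w [^] d \<in> H" and "w [^] k \<otimes> inv u \<in> H"
  shows "w [^] (k - d) \<otimes> inv u \<in> H"
proof -
  have "w [^] k = w [^] d \<otimes> w [^] (k - d)"
    using nat_pow_mult[OF w, of d "k - d"] \<open>d \<le> k\<close> by simp
  then have "w [^] (k - d) \<otimes> inv u = inv (w [^] d) \<otimes> (w [^] k \<otimes> inv u)"
    using w u by (simp add: m_assoc[symmetric] l_inv)
  then show ?thesis
    using assms by (simp add: subgroup.m_closed subgroup.m_inv_closed)
qed

context cyclic_reduction
begin

lemma pow_conj_wpow: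
  "w \<in> carrier (FG n) \<Longrightarrow> 1 \<le> j \<Longrightarrow> w [^]\<^bsub>FG n\<^esub> j = c @ wpow j v @ winv c"
  using pow_free_group red_wpow by simp

lemma take_red_conj_wpow_append:
  assumes k: "1 \<le> k" and y: "reduced y" and j: "j + length y \<le> k"
  shows "take (length c + j * length v) (red ((c @ wpow k v @ winv c) @ y)) = c @ wpow j v"
proof -
  have "1 \<le> length v" using v_ne by (cases v) auto
  then have "length y \<le> length y * length v" by simp
  moreover have "j * length v + length y * length v \<le> k * length v"
    using mult_le_mono1[OF j, of "length v"] by (simp add: add_mult_distrib)
  ultimately have "length c + j * length v + length y \<le> length (c @ wpow k v @ winv c)"
    unfolding length_append length_winv length_wpow by linarith
  then have "take (length c + j * length v) (red ((c @ wpow k v @ winv c) @ y))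
      = take (length c + j * length v) (c @ wpow k v @ winv c)"
    by (rule take_red_append[OF reduced_conj_wpow[OF k] y])
  also have "\<dots> = c @ wpow j v"
    using wpow_add[of j "k - j" v] j by (simp add: length_wpow)
  finally show ?thesis .
qed

lemma pow_mem_of_coset_eq:
  assumes H: "subgroup H (FG n)" and w_carrier: "w \<in> carrier (FG n)" and "a < b"
    and eq: "coset n H (c @ wpow a v) = coset n H (c @ wpow b v)"
  shows "w [^]\<^bsub>FG n\<^esub> (b - a) \<in> H"
proof -
  have split: "wpow b v = wpow a v @ wpow (b - a) v" "wpow b v = wpow (b - a) v @ wpow a v"
    using wpow_add[of a "b - a" v] wpow_add[of "b - a" a v] \<open>a < b\<close> by simp_all
  have "c @ wpow b v @ winv c \<in> carrier (FG n)"
    using pow_conj_wpow[OF w_carrier, of b] FG.nat_pow_closed[OF w_carrier, of b] \<open>a < b\<close> by simp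
  then have pb: "c @ wpow b v \<in> carrier (FG n)"
    using take_carrier[of "c @ wpow b v @ winv c" n "length (c @ wpow b v)"] by simp
  then have pa: "c @ wpow a v \<in> carrier (FG n)"
    using take_carrier[of "c @ wpow b v" n "length (c @ wpow a v)"] split(1) by simp
  have "c @ wpow b v \<in> coset n H (c @ wpow a v)"
    using eq FG.rcos_self[OF pb H] by simp
  then have "(c @ wpow b v) \<otimes>\<^bsub>FG n\<^esub> inv\<^bsub>FG n\<^esub> (c @ wpow a v) \<in> H"
    by (rule subgroup.rcos_module_imp[OF H group_free_group pa])
  moreover have "(c @ wpow b v) \<otimes>\<^bsub>FG n\<^esub> inv\<^bsub>FG n\<^esub> (c @ wpow a v) = w [^]\<^bsub>FG n\<^esub> (b - a)"
  proof -
    have "(c @ wpow b v) \<otimes>\<^bsub>FG n\<^esub> inv\<^bsub>FG n\<^esub> (c @ wpow a v)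
        = red ((c @ wpow (b - a) v) @ wpow a v @ winv (wpow a v) @ winv c)"
      using pa split(2) by (simp add: inv_free_group winv_append)
    also have "\<dots> = c @ wpow (b - a) v @ winv c"
      using red_cancel_inverse[of "c @ wpow (b - a) v" "wpow a v" "winv c"] reduced_conj_wpow[of "b - a"] \<open>a < b\<close>
      by (simp add: red_reduced)
    finally show ?thesis using pow_conj_wpow[OF w_carrier, of "b - a"] \<open>a < b\<close> by simp
  qed
  ultimately show ?thesis by simp
qed

end

lemma pigeonhole_atMost:
  assumes "finite S" and "\<And>j. j \<le> M \<Longrightarrow> f j \<in> S" and "card S \<le> M"
  obtains a b where "a < b" "b \<le> M" "f a = f b"
proof -
  have "card (f ` {..M}) \<le> card S" using assms(1,2) by (intro card_mono) auto
  then have "\<not> inj_on f {..M}" using assms(3) by (intro pigeonhole) simp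
  then obtain a b where "a \<le> M" "b \<le> M" "f a = f b" "a \<noteq> b" unfolding inj_on_def by auto
  then show ?thesis using that by (metis linorder_neqE_nat)
qed

lemma target_carrier:
  assumes "u \<in> carrier (FG n)" "w \<in> carrier (FG n)"
  shows "target u w k \<in> carrier (FG n)"
  using target_free_group[OF assms] FG.m_closed[OF FG.nat_pow_closed[OF assms(2)] FG.inv_closed[OF assms(1)]]
  by simp

lemma target_mem_shorter:
  assumes gs: "set gs \<subseteq> carrier (FG n)" and u: "u \<in> carrier (FG n)" and w_carrier: "w \<in> carrier (FG n)"
    and k: "order_bound gs u < k" and mem: "target u w k \<in> generate (FG n) (set gs)"
  obtains k' where "1 \<le> k'" "k' < k" "target u w k' \<in> generate (FG n) (set gs)"
proof (cases "w = []")
  case True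
  then have "target u w 1 = target u w k" by (simp add: target_def)
  moreover have "1 < k" using k by (simp add: order_bound_def)
  ultimately show ?thesis using that[of 1] mem by simp
next
  case False
  let ?H = "generate (FG n) (set gs)"
  have H: "subgroup ?H (FG n)" by (rule FG.generate_is_subgroup[OF gs])
  have "reduced w" "in_alphabet n w" using w_carrier by (simp_all add: carrier_free_group)
  then obtain c v where "w = c @ v @ winv c" "reduced v" "v \<noteq> [] \<longrightarrow> hd v \<noteq> - last v" "v = [] \<longrightarrow> c = []"
    using cyclic_reduction_exists by blast
  then interpret cyclic_reduction w c v
    using False w_carrier by unfold_locales (auto simp: carrier_free_group)
  define S where "S = (\<lambda>q. coset n ?H q) ` set (gen_prefixes gs)"
  have "card S \<le> length (gen_prefixes gs)"
    unfolding S_def by (rule le_trans[OF card_image_le[OF finite_set] card_length])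
  then have u_S_k: "length u + card S < k"
    using k length_gen_prefixes[of gs] by (simp add: order_bound_def)
  have k1: "1 \<le> k" using u_S_k by simp
  have target_k: "target u w k = red ((c @ wpow k v @ winv c) @ winv u)"
    using red_wpow[OF k1] red_append_left[of "wpow k w" "winv u"]
    by (simp add: target_def)
  have in_S: "coset n ?H (c @ wpow j v) \<in> S" if j: "j \<le> card S" for j
  proof -
    let ?i = "length c + j * length v"
    have "reduced (winv u)" using u by (simp add: carrier_free_group reduced_winv)
    then have prefix: "take ?i (target u w k) = c @ wpow j v"
      using take_red_conj_wpow_append[OF k1, of "winv u" j] j u_S_k target_k by simp
    obtain q where "q \<in> set (gen_prefixes gs)" "coset n ?H (take ?i (target u w k)) = coset n ?H q"
      using prefix_coset_gen_prefixes[OF gs mem] by blast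
    then show ?thesis using prefix by (auto simp: S_def)
  qed
  obtain a b where ab: "a < b" "b \<le> card S" "coset n ?H (c @ wpow a v) = coset n ?H (c @ wpow b v)"
    using pigeonhole_atMost[of S "card S" "\<lambda>j. coset n ?H (c @ wpow j v)"] in_S
    by (auto simp: S_def)
  have "w [^]\<^bsub>FG n\<^esub> (b - a) \<in> ?H" by (rule pow_mem_of_coset_eq[OF H w_carrier ab(1,3)])
  then have "target u w (k - (b - a)) \<in> ?H"
    using FG.pow_diff_mult_inv_mem[OF H w_carrier u, of "b - a" k] mem ab u_S_k
    by (simp add: target_free_group[OF u w_carrier])
  then show ?thesis using that[of "k - (b - a)"] ab u_S_k by simp
qed

lemma ex_target_mem_le_order_bound:
  assumes gs: "set gs \<subseteq> carrier (FG n)" and u: "u \<in> carrier (FG n)" and w: "w \<in> carrier (FG n)"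
    and "1 \<le> k" and "target u w k \<in> generate (FG n) (set gs)"
  shows "\<exists>k'\<in>{1..order_bound gs u}. target u w k' \<in> generate (FG n) (set gs)"
  using assms(4,5)
proof (induction k rule: less_induct)
  case (less k)
  show ?case
  proof (cases "k \<le> order_bound gs u")
    case True
    then show ?thesis using less.prems by auto
  next
    case False
    then obtain k' where "1 \<le> k'" "k' < k" "target u w k' \<in> generate (FG n) (set gs)"
      using target_mem_shorter[OF gs u w] less.prems by (metis not_le)
    then show ?thesis using less.IH by blast
  qed
qed

section \<open>Order certificates\<close>

lemma OrdS_eqI:
  assumes "1 \<le> y" "g [^]\<^bsub>G\<^esub> y \<in> S" "\<And>k. 1 \<le> k \<Longrightarrow> k < y \<Longrightarrow> g [^]\<^bsub>G\<^esub> k \<notin> S"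
  shows "OrdS G S g = y"
proof -
  have "(LEAST k::nat. 1 \<le> k \<and> g [^]\<^bsub>G\<^esub> k \<in> S) = y"
  proof (rule Least_equality)
    show "1 \<le> y \<and> g [^]\<^bsub>G\<^esub> y \<in> S" using assms(1,2) by simp
    show "y \<le> m" if "1 \<le> m \<and> g [^]\<^bsub>G\<^esub> m \<in> S" for m
      using assms(3)[of m] that by (meson leI)
  qed
  moreover have "\<exists>k::nat\<ge>1. g [^]\<^bsub>G\<^esub> k \<in> S" using assms(1,2) by blast
  ultimately show ?thesis by (simp add: OrdS_def)
qed

lemma OrdS_eq_0_iff: "OrdS G S g = 0 \<longleftrightarrow> (\<forall>k::nat\<ge>1. g [^]\<^bsub>G\<^esub> k \<notin> S)"
proof
  assume OrdS_0: "OrdS G S g = 0"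
  show "\<forall>k::nat\<ge>1. g [^]\<^bsub>G\<^esub> k \<notin> S"
  proof (intro allI impI notI)
    fix k :: nat assume k: "1 \<le> k" "g [^]\<^bsub>G\<^esub> k \<in> S"
    then have "1 \<le> (LEAST k::nat. 1 \<le> k \<and> g [^]\<^bsub>G\<^esub> k \<in> S)"
      using LeastI[of "\<lambda>k::nat. 1 \<le> k \<and> g [^]\<^bsub>G\<^esub> k \<in> S" k] by blast
    then show False using OrdS_0 k unfolding OrdS_def by (metis not_one_le_zero)
  qed
qed (auto simp: OrdS_def)

lemma OrdS_pow_mem:
  assumes "OrdS G S g \<noteq> 0"
  shows "g [^]\<^bsub>G\<^esub> OrdS G S g \<in> S"
proof -
  have "\<exists>k::nat. 1 \<le> k \<and> g [^]\<^bsub>G\<^esub> k \<in> S" using assms by (auto simp: OrdS_def split: if_splits)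
  from LeastI_ex[OF this] show ?thesis using assms by (auto simp: OrdS_def split: if_splits)
qed

lemma pow_not_mem_less_OrdS:
  assumes "1 \<le> k" "k < OrdS G S g"
  shows "g [^]\<^bsub>G\<^esub> k \<notin> S"
proof -
  have "k < (LEAST k::nat. 1 \<le> k \<and> g [^]\<^bsub>G\<^esub> k \<in> S)"
    using assms(2) by (auto simp: OrdS_def split: if_splits)
  then show ?thesis using not_less_Least assms(1) by blast
qed

lemma pow_mem_rcos_iff_target_mem:
  assumes "subgroup H (FG n)" "u \<in> carrier (FG n)" "w \<in> carrier (FG n)"
  shows "w [^]\<^bsub>FG n\<^esub> (k::nat) \<in> H #>\<^bsub>FG n\<^esub> u \<longleftrightarrow> target u w k \<in> H"
  using subgroup.rcos_module[OF assms(1) group_free_group assms(2) FG.nat_pow_closed[OF assms(3)]]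
    target_free_group[OF assms(2,3)]
  by simp

definition order_cert ::
  "int list list \<Rightarrow> int list \<Rightarrow> int list \<Rightarrow> nat \<Rightarrow> nat list \<Rightarrow> (nat \<Rightarrow> edge list) \<Rightarrow> bool" where
  "order_cert gs u w y es Ls \<longleftrightarrow>
     (\<forall>k\<in>{1..(if y = 0 then order_bound gs u else y - 1)}. nonmember_cert gs (Ls k) (target u w k)) \<and>
     (y \<noteq> 0 \<longrightarrow> member_cert gs es (target u w y))"

context
  fixes n :: nat and gs :: "int list list" and u w :: "int list"
  assumes gs: "set gs \<subseteq> carrier (FG n)" and u: "u \<in> carrier (FG n)" and w: "w \<in> carrier (FG n)"
begin

lemma order_cert_sound:
  assumes "order_cert gs u w y es Ls"
  shows "OrdS (FG n) (generate (FG n) (set gs) #>\<^bsub>FG n\<^esub> u) w = y"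
proof -
  let ?H = "generate (FG n) (set gs)"
  note mem_iff = pow_mem_rcos_iff_target_mem[OF FG.generate_is_subgroup[OF gs] u w]
  have not_mem: "target u w k \<notin> ?H" if "1 \<le> k" "k \<le> (if y = 0 then order_bound gs u else y - 1)" for k
  proof -
    have "nonmember_cert gs (Ls k) (target u w k)" using assms that by (auto simp: order_cert_def)
    then show ?thesis by (rule nonmember_cert_sound[OF gs])
  qed
  show ?thesis
  proof (cases "y = 0")
    case True
    have "target u w k \<notin> ?H" if "1 \<le> k" for k
      using ex_target_mem_le_order_bound[OF gs u w that] not_mem True by fastforce
    then show ?thesis using True by (simp add: OrdS_eq_0_iff mem_iff)
  next
    case False
    then have "target u w y \<in> ?H"
      using member_cert_sound[OF gs] assms by (auto simp: order_cert_def)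
    then show ?thesis using False not_mem by (intro OrdS_eqI) (auto simp: mem_iff)
  qed
qed

lemma order_cert_exists:
  "\<exists>es Ls. order_cert gs u w (OrdS (FG n) (generate (FG n) (set gs) #>\<^bsub>FG n\<^esub> u) w) es Ls"
proof -
  let ?H = "generate (FG n) (set gs)" and ?y = "OrdS (FG n) (generate (FG n) (set gs) #>\<^bsub>FG n\<^esub> u) w"
  note mem_iff = pow_mem_rcos_iff_target_mem[OF FG.generate_is_subgroup[OF gs] u w]
  define Ls where "Ls k = (SOME L. nonmember_cert gs L (target u w k))" for k
  have Ls: "nonmember_cert gs (Ls k) (target u w k)" if "target u w k \<notin> ?H" for k
    unfolding Ls_def
    by (rule someI_ex[OF nonmember_cert_complete[OF gs target_carrier[OF u w] that]])
  show ?thesis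
  proof (cases "?y = 0")
    case True
    then have "target u w k \<notin> ?H" if "1 \<le> k" for k using that by (simp add: OrdS_eq_0_iff mem_iff)
    then have "order_cert gs u w ?y [] Ls" using True Ls by (auto simp: order_cert_def)
    then show ?thesis by blast
  next
    case False
    then obtain es where "member_cert gs es (target u w ?y)"
      using member_cert_complete[OF gs] OrdS_pow_mem[OF False] by (auto simp: mem_iff)
    moreover have "target u w k \<notin> ?H" if "1 \<le> k" "k < ?y" for k
      using pow_not_mem_less_OrdS[OF that] by (simp add: mem_iff)
    ultimately have "order_cert gs u w ?y es Ls"
      using False Ls by (auto simp: order_cert_def)
    then show ?thesis by blast
  qed
qed

end

section \<open>Checking certificates by recursive functions\<close>

(* int_encode sends i \<ge> 0 to 2 i and i < 0 to 2 |i| - 1. *)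
definition uminus_code :: "nat \<Rightarrow> nat" where
  "uminus_code x = (if x = 0 then 0 else if x mod 2 = 0 then x - 1 else x + 1)"

lemma computable_mod2[intro]: "computable k a \<Longrightarrow> computable k (\<lambda>xs. a xs mod 2)"
proof -
  have r: "natrec (\<lambda>e i acc. 1 - acc) 0 0 x = x mod 2" for x
    by (induction x) (auto simp: mod_Suc)
  assume "computable k a"
  then have "computable k (\<lambda>xs. natrec (\<lambda>e i acc. 1 - acc) 0 0 (a xs))"
    by (intro computable_intros) simp_all
  then show ?thesis by (rule computable_cong) (simp only: r)
qed

lemma computable_uminus_code[intro]: "computable k a \<Longrightarrow> computable k (\<lambda>xs. uminus_code (a xs))"
  unfolding uminus_code_def by (intro computable_intros computable_mod2)

lemma uminus_code_int_encode[simp]: "uminus_code (int_encode a) = int_encode (- a)"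
  by (cases "a > 0"; cases "a = 0") (auto simp: uminus_code_def int_encode_def sum_encode_def nat_diff_distrib)

definition rev_code :: "nat \<Rightarrow> nat" where "rev_code c = foldl_code (\<lambda>e x acc. cons_code x acc) 0 0 c"

definition append_code :: "nat \<Rightarrow> nat \<Rightarrow> nat" where
  "append_code a b = foldl_code (\<lambda>e x acc. cons_code x acc) 0 b (rev_code a)"

definition winv_code :: "nat \<Rightarrow> nat" where
  "winv_code c = foldl_code (\<lambda>e x acc. cons_code (uminus_code x) acc) 0 0 c"

definition redstep_code :: "nat \<Rightarrow> nat \<Rightarrow> nat" where
  "redstep_code x acc =
     (if acc = 0 then cons_code x 0 else if hd_code acc = uminus_code x then tl_code acc else cons_code x acc)"
definition red_code :: "nat \<Rightarrow> nat" where
  "red_code c = foldl_code (\<lambda>e x acc. redstep_code x acc) 0 0 (rev_code c)"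

definition wpow_code :: "nat \<Rightarrow> nat \<Rightarrow> nat" where
  "wpow_code w k = natrec (\<lambda>e i acc. append_code e acc) w 0 k"

lemma computable_rev_code[intro]: "computable k a \<Longrightarrow> computable k (\<lambda>xs. rev_code (a xs))"
  unfolding rev_code_def
  by (intro computable_intros computable_foldl_code computable_cons_code) simp_all

lemma computable_append_code[intro]:
  "computable k a \<Longrightarrow> computable k b \<Longrightarrow> computable k (\<lambda>xs. append_code (a xs) (b xs))"
  unfolding append_code_def
  by (intro computable_intros computable_foldl_code computable_cons_code computable_rev_code) simp_all

lemma computable_winv_code[intro]: "computable k a \<Longrightarrow> computable k (\<lambda>xs. winv_code (a xs))"
  unfolding winv_code_def
  by (intro computable_intros computable_foldl_code computable_cons_code computable_uminus_code) simp_all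

lemma computable_red_code[intro]: "computable k a \<Longrightarrow> computable k (\<lambda>xs. red_code (a xs))"
  unfolding red_code_def redstep_code_def
  by (intro computable_intros computable_foldl_code computable_cons_code computable_uminus_code
        computable_hd_code computable_tl_code computable_rev_code) simp_all
lemma computable_wpow_code[intro]:
  "computable k a \<Longrightarrow> computable k b \<Longrightarrow> computable k (\<lambda>xs. wpow_code (a xs) (b xs))"
  unfolding wpow_code_def by (intro computable_intros computable_append_code) simp_all

lemma rev_code_list_encode[simp]: "rev_code (list_encode xs) = list_encode (rev xs)"
proof -
  have "foldl (\<lambda>acc x. cons_code x acc) (list_encode b) xs = list_encode (rev xs @ b)" for b
  proof (induction xs arbitrary: b)
    case (Cons a xs) then show ?case using Cons.IH[of "a#b"] by simp
  qed simp
  from this[of "[]"] show ?thesis by (simp add: rev_code_def)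
qed

lemma append_code_list_encode[simp]:
  "append_code (list_encode xs) (list_encode ys) = list_encode (xs @ ys)"
proof -
  have "foldl (\<lambda>acc x. cons_code x acc) (list_encode b) xs = list_encode (rev xs @ b)" for b xs
  proof (induction xs arbitrary: b)
    case (Cons a xs) then show ?case using Cons.IH[of "a#b"] by simp
  qed simp
  from this[of ys "rev xs"] show ?thesis by (simp add: append_code_def)
qed

lemma enc_word_Cons: "enc_word (a # xs) = cons_code (int_encode a) (enc_word xs)"
  by (simp add: enc_word_def)

lemma enc_word_Nil[simp]: "enc_word [] = 0"
  by (simp add: enc_word_def)

lemma enc_word_inj[simp]: "enc_word xs = enc_word ys \<longleftrightarrow> xs = ys"
  by (auto simp: enc_word_def list_encode_eq inj_int_encode inj_map_eq_map)

lemma rev_code_enc_word[simp]: "rev_code (enc_word xs) = enc_word (rev xs)"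
  by (simp add: enc_word_def rev_map)

lemma append_code_enc_word[simp]: "append_code (enc_word xs) (enc_word ys) = enc_word (xs @ ys)"
  by (simp add: enc_word_def)

lemma winv_code_enc_word[simp]: "winv_code (enc_word xs) = enc_word (winv xs)"
proof -
  have "foldl (\<lambda>acc x. cons_code (uminus_code x) acc) (enc_word b) (map int_encode xs)
      = enc_word (winv xs @ b)" for b
    by (induction xs arbitrary: b) (auto simp: enc_word_Cons[symmetric] winv_Cons)
  from this[of "[]"] show ?thesis by (simp add: winv_code_def enc_word_def[of xs])
qed

lemma redstep_code_enc_word: "redstep_code (int_encode a) (enc_word r) = enc_word (redstep a r)"
  by (cases r) (auto simp: redstep_code_def enc_word_Cons int_encode_eq)

lemma red_code_enc_word[simp]: "red_code (enc_word xs) = enc_word (red xs)"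
proof -
  have A: "foldl (\<lambda>acc x. redstep_code x acc) (enc_word b) (map int_encode (rev ys))
      = enc_word (foldr redstep ys b)" for ys b
    by (induction ys arbitrary: b rule: rev_induct) (auto simp: redstep_code_enc_word)
  have B: "foldr redstep xs [] = red xs"
    by (induction xs) (simp_all del: red.simps(2) add: red_Cons)
  show ?thesis
    using A[of "[]" xs] B by (simp add: red_code_def enc_word_def[of xs] rev_map)
qed

lemma wpow_code_enc_word[simp]: "wpow_code (enc_word xs) k = enc_word (wpow k xs)"
  by (induction k) (auto simp: wpow_code_def)

definition edge_encode :: "edge \<Rightarrow> nat" where
  "edge_encode e = (case e of (s, a, t) \<Rightarrow> pair s (pair (int_encode a) t))"

definition edge_decode :: "nat \<Rightarrow> edge" where
  "edge_decode e = (pfst e, int_decode (pfst (psnd e)), psnd (psnd e))"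

definition edges_decode :: "nat \<Rightarrow> edge list" where
  "edges_decode c = map edge_decode (list_decode c)"

definition edges_encode :: "edge list \<Rightarrow> nat" where
  "edges_encode L = list_encode (map edge_encode L)"

lemma edge_encode_decode[simp]: "edge_encode (edge_decode e) = e"
  by (simp add: edge_encode_def edge_decode_def pair_surj)

lemma edges_encode_decode[simp]: "edges_encode (edges_decode c) = c"
  by (simp add: edges_encode_def edges_decode_def comp_def)

definition lookup_code :: "nat \<Rightarrow> nat \<Rightarrow> nat \<Rightarrow> nat" where
  "lookup_code E st x = foldl_code (\<lambda>e ed acc. if acc \<noteq> 0 then acc else
      if pfst ed = pfst e \<and> pfst (psnd ed) = psnd e then Suc (psnd (psnd ed)) else 0) (pair st x) 0 E"

(* State s is coded as s + 1, leaving 0 to signal a missing edge. *)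
definition follow_code :: "nat \<Rightarrow> nat \<Rightarrow> nat \<Rightarrow> nat" where
  "follow_code E st c = foldl_code (\<lambda>E x st. if st = 0 then 0 else lookup_code E (st - 1) x) E st c"

lemma computable_lookup_code[intro]:
  "computable k a \<Longrightarrow> computable k b \<Longrightarrow> computable k c \<Longrightarrow> computable k (\<lambda>xs. lookup_code (a xs) (b xs) (c xs))"
  unfolding lookup_code_def by (intro computable_intros computable_foldl_code) simp_all

lemma computable_follow_code[intro]:
  "computable k a \<Longrightarrow> computable k b \<Longrightarrow> computable k c \<Longrightarrow> computable k (\<lambda>xs. follow_code (a xs) (b xs) (c xs))"
  unfolding follow_code_def
  by (intro computable_intros computable_foldl_code computable_lookup_code) simp_all

lemma lookup_code_edges_encode:
  "lookup_code (edges_encode L) s (int_encode a) = (case lookup L s a of None \<Rightarrow> 0 | Some t \<Rightarrow> Suc t)"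
proof -
  let ?e = "pair s (int_encode a)"
  have "foldl (\<lambda>acc ed. if acc \<noteq> 0 then acc else
      if pfst ed = pfst ?e \<and> pfst (psnd ed) = psnd ?e then Suc (psnd (psnd ed)) else 0) b (map edge_encode L)
      = (if b \<noteq> 0 then b else (case lookup L s a of None \<Rightarrow> 0 | Some t \<Rightarrow> Suc t))" for b
  proof (induction L arbitrary: b)
    case (Cons e L)
    obtain s' a' t where e: "e = (s', a', t)" by (cases e)
    show ?case using Cons by (auto simp: e edge_encode_def int_encode_eq)
  qed simp
  from this[of 0] show ?thesis
    unfolding lookup_code_def edges_encode_def foldl_code_list_encode by simp
qed

lemma follow_code_edges_encode:
  "follow_code (edges_encode L) (Suc s) (enc_word w) = (case follow L s w of None \<Rightarrow> 0 | Some t \<Rightarrow> Suc t)"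
proof -
  let ?g = "\<lambda>st x. if st = 0 then 0 else lookup_code (edges_encode L) (st - 1) x"
  have z: "foldl ?g 0 ys = 0" for ys by (induction ys) auto
  have "foldl ?g (Suc s) (map int_encode w) = (case follow L s w of None \<Rightarrow> 0 | Some t \<Rightarrow> Suc t)"
  proof (induction w arbitrary: s)
    case (Cons a w)
    show ?case
    proof (cases "lookup L s a")
      case None then show ?thesis by (simp add: lookup_code_edges_encode z)
    next
      case (Some t) then show ?thesis using Cons[of t] by (simp add: lookup_code_edges_encode)
    qed
  qed simp
  then show ?thesis by (simp add: follow_code_def enc_word_def)
qed

definition elem_code :: "nat \<Rightarrow> nat \<Rightarrow> nat" where
  "elem_code E y = bex_code (\<lambda>y x. x = y) y E"

lemma computable_elem_code[intro]:
  "computable k a \<Longrightarrow> computable k b \<Longrightarrow> computable k (\<lambda>xs. elem_code (a xs) (b xs))"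
  unfolding elem_code_def by (intro computable_intros computable_bex_code) simp_all

lemma elem_code_list_encode: "elem_code (list_encode xs) y = (if y \<in> set xs then 1 else 0)"
  unfolding elem_code_def by auto

(* The code of an edge (s, a, t) has source pfst, label code pfst \<circ> psnd and target psnd \<circ> psnd. *)
definition symmetric_code :: "nat \<Rightarrow> nat" where
  "symmetric_code E =
     ball_code (\<lambda>E ed. elem_code E (pair (psnd (psnd ed)) (pair (uminus_code (pfst (psnd ed))) (pfst ed))) \<noteq> 0) E E"

definition deterministic_code :: "nat \<Rightarrow> nat" where
  "deterministic_code E = ball_code (\<lambda>E ed. ball_code (\<lambda>ed ed'.
     pfst ed = pfst ed' \<and> pfst (psnd ed) = pfst (psnd ed') \<longrightarrow> psnd (psnd ed) = psnd (psnd ed')) ed E \<noteq> 0) E E"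

lemma computable_symmetric_code[intro]: "computable k a \<Longrightarrow> computable k (\<lambda>xs. symmetric_code (a xs))"
  unfolding symmetric_code_def
  by (intro computable_intros computable_ball_code computable_elem_code computable_uminus_code) simp_all

lemma computable_deterministic_code[intro]:
  "computable k a \<Longrightarrow> computable k (\<lambda>xs. deterministic_code (a xs))"
  unfolding deterministic_code_def by (intro computable_intros computable_ball_code) simp_all

lemma edge_encode_eq_iff: "edge_encode x = edge_encode y \<longleftrightarrow> x = y"
  by (cases x; cases y) (auto simp: edge_encode_def int_encode_eq)

lemma symmetric_code_edges_encode: "symmetric_code (edges_encode L) \<noteq> 0 \<longleftrightarrow> edges_symmetric L"
proof -
  let ?rev = "\<lambda>ed. pair (psnd (psnd ed)) (pair (uminus_code (pfst (psnd ed))) (pfst ed))"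
  have rev: "?rev (edge_encode x) = edge_encode (snd (snd x), - fst (snd x), fst x)" for x
    by (cases x) (simp add: edge_encode_def)
  have "symmetric_code (edges_encode L) \<noteq> 0 \<longleftrightarrow>
      (\<forall>x\<in>set L. elem_code (edges_encode L) (?rev (edge_encode x)) \<noteq> 0)"
    by (simp add: symmetric_code_def edges_encode_def)
  also have "\<dots> \<longleftrightarrow> (\<forall>x\<in>set L. (snd (snd x), - fst (snd x), fst x) \<in> set L)"
    by (simp only: rev) (simp add: edges_encode_def elem_code_list_encode edge_encode_eq_iff image_iff)
  also have "\<dots> \<longleftrightarrow> edges_symmetric L"
    unfolding edges_symmetric_def by force
  finally show ?thesis .
qed

lemma deterministic_code_edges_encode:
  "deterministic_code (edges_encode L) \<noteq> 0 \<longleftrightarrow> edges_deterministic L"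
proof -
  let ?P = "\<lambda>x y. fst x = fst y \<and> fst (snd x) = fst (snd y) \<longrightarrow> snd (snd x) = snd (snd y)"
  have if_neq_0: "((if P then 1 else 0) \<noteq> (0::nat)) = P" for P by simp
  have P_code: "(pfst (edge_encode x) = pfst (edge_encode y) \<and>
        pfst (psnd (edge_encode x)) = pfst (psnd (edge_encode y)) \<longrightarrow>
      psnd (psnd (edge_encode x)) = psnd (psnd (edge_encode y))) \<longleftrightarrow> ?P x y" for x y
    by (cases x; cases y) (auto simp: edge_encode_def int_encode_eq)
  have "deterministic_code (edges_encode L) \<noteq> 0 \<longleftrightarrow> (\<forall>x\<in>set L. \<forall>y\<in>set L. ?P x y)"
    unfolding deterministic_code_def edges_encode_def ball_code_list_encode
    by (simp only: if_neq_0 set_map ball_simps(9) P_code)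
  also have "\<dots> \<longleftrightarrow> edges_deterministic L"
    unfolding edges_deterministic_def
  proof (intro iffI allI impI)
    fix s a t t' assume "\<forall>x\<in>set L. \<forall>y\<in>set L. ?P x y" "(s, a, t) \<in> set L" "(s, a, t') \<in> set L"
    then show "t = t'" by fastforce
  next
    assume H: "\<forall>s a t t'. (s, a, t) \<in> set L \<longrightarrow> (s, a, t') \<in> set L \<longrightarrow> t = t'"
    show "\<forall>x\<in>set L. \<forall>y\<in>set L. ?P x y"
    proof (intro ballI impI)
      fix x y assume "x \<in> set L" "y \<in> set L" "fst x = fst y \<and> fst (snd x) = fst (snd y)"
      then show "snd (snd x) = snd (snd y)"
        using H[rule_format, of "fst x" "fst (snd x)" "snd (snd x)" "snd (snd y)"] by (cases x; cases y) auto
    qed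
  qed
  finally show ?thesis .
qed

definition loops_code :: "nat \<Rightarrow> nat \<Rightarrow> nat" where
  "loops_code E G = ball_code (\<lambda>E g. follow_code E 1 g = 1) E G"

lemma computable_loops_code[intro]:
  "computable k a \<Longrightarrow> computable k b \<Longrightarrow> computable k (\<lambda>xs. loops_code (a xs) (b xs))"
  unfolding loops_code_def
  by (intro computable_intros computable_ball_code computable_follow_code) simp_all

lemma follow_code_loop_iff:
  "follow_code (edges_encode L) 1 (enc_word w) = 1 \<longleftrightarrow> follow L 0 w = Some 0"
  using follow_code_edges_encode[of L 0 w] by (auto split: option.splits)

lemma loops_code_edges_encode:
  "loops_code (edges_encode L) (enc_words gs) \<noteq> 0 \<longleftrightarrow> (\<forall>g\<in>set gs. follow L 0 g = Some 0)"
  using follow_code_loop_iff[of L] by (simp add: loops_code_def enc_words_def)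

lemma edge_decode_encode[simp]: "edge_decode (edge_encode e) = e"
  by (cases e) (simp add: edge_encode_def edge_decode_def)

lemma edges_decode_encode[simp]: "edges_decode (edges_encode L) = L"
  by (simp add: edges_decode_def edges_encode_def comp_def)

definition nonmember_cert_code :: "nat \<Rightarrow> nat \<Rightarrow> nat \<Rightarrow> bool" where
  "nonmember_cert_code G E T \<longleftrightarrow>
     symmetric_code E \<noteq> 0 \<and> deterministic_code E \<noteq> 0 \<and> loops_code E G \<noteq> 0 \<and> follow_code E 1 T \<noteq> 1"

lemma nonmember_cert_code_correct:
  "nonmember_cert_code (enc_words gs) E (enc_word g) \<longleftrightarrow> nonmember_cert gs (edges_decode E) g"
proof -
  have "nonmember_cert_code (enc_words gs) (edges_encode (edges_decode E)) (enc_word g)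
      \<longleftrightarrow> nonmember_cert gs (edges_decode E) g"
    unfolding nonmember_cert_code_def nonmember_cert_def
    by (simp only: symmetric_code_edges_encode deterministic_code_edges_encode loops_code_edges_encode
        follow_code_loop_iff)
  then show ?thesis by simp
qed

lemma decidable_nonmember_cert_code[intro]:
  "computable k a \<Longrightarrow> computable k b \<Longrightarrow> computable k c \<Longrightarrow>
   decidable k (\<lambda>xs. nonmember_cert_code (a xs) (b xs) (c xs))"
  unfolding nonmember_cert_code_def
  by (intro computable_intros computable_symmetric_code computable_deterministic_code
      computable_loops_code computable_follow_code)

definition gen_select_code :: "nat \<Rightarrow> nat \<Rightarrow> nat" where
  "gen_select_code G e = (if psnd e = 0 then nth_code G (pfst e) else winv_code (nth_code G (pfst e)))"

definition product_code :: "nat \<Rightarrow> nat \<Rightarrow> nat" where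
  "product_code G c = foldl_code (\<lambda>G x acc. append_code acc (gen_select_code G x)) G 0 c"

lemma computable_product_code[intro]:
  "computable k a \<Longrightarrow> computable k b \<Longrightarrow> computable k (\<lambda>xs. product_code (a xs) (b xs))"
  unfolding product_code_def gen_select_code_def
  by (intro computable_intros computable_foldl_code computable_append_code computable_nth_code
      computable_winv_code) simp_all

lemma gen_select_code_enc_words: "gen_select_code (enc_words gs) e = enc_word (gen_select gs e)"
proof -
  have "nth_code (enc_words gs) i = enc_word (if i < length gs then gs ! i else [])" for i
    by (simp add: enc_words_def nth_code_list_encode)
  then show ?thesis by (simp add: gen_select_code_def gen_select_def Let_def)
qed

lemma product_code_enc_words:
  "product_code (enc_words gs) (list_encode es) = enc_word (concat (map (gen_select gs) es))"
proof -
  have "foldl (\<lambda>acc x. append_code acc (gen_select_code (enc_words gs) x)) (enc_word b) es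
      = enc_word (b @ concat (map (gen_select gs) es))" for b
    by (induction es arbitrary: b) (simp_all add: gen_select_code_enc_words)
  from this[of "[]"] show ?thesis by (simp add: product_code_def)
qed

definition member_cert_code :: "nat \<Rightarrow> nat \<Rightarrow> nat \<Rightarrow> bool" where
  "member_cert_code G c T \<longleftrightarrow> red_code (product_code G c) = T"

lemma decidable_member_cert_code[intro]:
  "computable k a \<Longrightarrow> computable k b \<Longrightarrow> computable k c \<Longrightarrow>
   decidable k (\<lambda>xs. member_cert_code (a xs) (b xs) (c xs))"
  unfolding member_cert_code_def
  by (intro computable_intros computable_red_code computable_product_code)

lemma member_cert_code_correct:
  "member_cert_code (enc_words gs) c (enc_word g) \<longleftrightarrow> member_cert gs (list_decode c) g"
  using product_code_enc_words[of gs "list_decode c"]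
  by (simp add: member_cert_code_def member_cert_def)

definition target_code :: "nat \<Rightarrow> nat \<Rightarrow> nat \<Rightarrow> nat" where
  "target_code W U k = red_code (append_code (wpow_code W k) (winv_code U))"

lemma computable_target_code[intro]:
  "computable k a \<Longrightarrow> computable k b \<Longrightarrow> computable k c \<Longrightarrow>
   computable k (\<lambda>xs. target_code (a xs) (b xs) (c xs))"
  unfolding target_code_def
  by (intro computable_red_code computable_append_code computable_wpow_code computable_winv_code)

lemma target_code_enc_word: "target_code (enc_word w) (enc_word u) k = enc_word (target u w k)"
  by (simp add: target_code_def target_def)

definition all_nonmember_code :: "nat \<Rightarrow> nat \<Rightarrow> nat" where
  "all_nonmember_code V N = natrec (\<lambda>V i acc.
     if acc \<noteq> 0 \<and> nonmember_cert_code (pfst V) (nth_code (psnd (psnd (psnd V))) (Suc i))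
          (target_code (pfst (psnd (psnd V))) (pfst (psnd V)) (Suc i)) then 1 else 0) V 1 N"

lemma computable_all_nonmember_code[intro]:
  "computable k a \<Longrightarrow> computable k b \<Longrightarrow> computable k (\<lambda>xs. all_nonmember_code (a xs) (b xs))"
  unfolding all_nonmember_code_def
  by (intro computable_intros decidable_nonmember_cert_code computable_nth_code computable_target_code) simp_all

lemma all_nonmember_code_correct:
  "all_nonmember_code (pair G (pair U (pair W C))) N =
   (if \<forall>k\<in>{1..N}. nonmember_cert_code G (nth_code C k) (target_code W U k) then 1 else 0)"
  by (induction N) (auto simp: all_nonmember_code_def atLeastAtMostSuc_conv)

definition gens_size_code :: "nat \<Rightarrow> nat" where
  "gens_size_code G = foldl_code (\<lambda>e g acc. acc + length_code g + 1) 0 0 G"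

lemma computable_gens_size_code[intro]: "computable k a \<Longrightarrow> computable k (\<lambda>xs. gens_size_code (a xs))"
  unfolding gens_size_code_def
  by (intro computable_intros computable_foldl_code computable_length_code) simp_all

lemma gens_size_code_enc_words:
  "gens_size_code (enc_words gs) = sum_list (map (\<lambda>g. length g + 1) gs)"
proof -
  have "foldl (\<lambda>acc g. acc + length_code g + 1) b (map enc_word gs)
      = b + sum_list (map (\<lambda>g. length g + 1) gs)" for b
    by (induction gs arbitrary: b) (auto simp: enc_word_def)
  then show ?thesis by (simp add: gens_size_code_def enc_words_def)
qed

definition order_bound_code :: "nat \<Rightarrow> nat \<Rightarrow> nat" where
  "order_bound_code G U = length_code U + 2 * gens_size_code G + 1"

lemma order_bound_code_correct: "order_bound_code (enc_words gs) (enc_word u) = order_bound gs u"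
  by (simp add: order_bound_code_def order_bound_def gens_size_code_enc_words enc_word_def)

(* z codes the claimed order y paired with a list whose entry 0 codes the membership certificate
   and whose entry k codes the graph for exponent k. *)
definition check_code :: "nat \<Rightarrow> nat \<Rightarrow> nat \<Rightarrow> nat \<Rightarrow> bool" where
  "check_code z G U W \<longleftrightarrow>
     all_nonmember_code (pair G (pair U (pair W (psnd z))))
       (if pfst z = 0 then order_bound_code G U else pfst z - 1) \<noteq> 0 \<and>
     (pfst z \<noteq> 0 \<longrightarrow> member_cert_code G (nth_code (psnd z) 0) (target_code W U (pfst z)))"

lemma decidable_check_code: "decidable 4 (\<lambda>ys. check_code (ys!0) (ys!1) (ys!2) (ys!3))"
  unfolding check_code_def order_bound_code_def
  by (intro computable_intros decidable_member_cert_code computable_all_nonmember_code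
      computable_nth_code computable_length_code computable_gens_size_code computable_target_code) simp_all

lemma check_code_correct:
  "check_code z (enc_words gs) (enc_word u) (enc_word w) \<longleftrightarrow>
   order_cert gs u w (pfst z) (list_decode (nth_code (psnd z) 0)) (\<lambda>k. edges_decode (nth_code (psnd z) k))"
  by (simp add: check_code_def order_cert_def all_nonmember_code_correct order_bound_code_correct
      target_code_enc_word nonmember_cert_code_correct member_cert_code_correct)

lemma check_code_complete:
  assumes "set gs \<subseteq> carrier (FG n)" "u \<in> carrier (FG n)" "w \<in> carrier (FG n)"
  shows "\<exists>z. check_code z (enc_words gs) (enc_word u) (enc_word w)"
proof -
  let ?y = "OrdS (FG n) (generate (FG n) (set gs) #>\<^bsub>FG n\<^esub> u) w"
  obtain es Ls where cert: "order_cert gs u w ?y es Ls" using order_cert_exists[OF assms] by blast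
  define cs where
    "cs = map (\<lambda>k. if k = 0 then list_encode es else edges_encode (Ls k)) [0..<Suc (order_bound gs u + ?y)]"
  have "nth_code (list_encode cs) 0 = list_encode es"
    by (simp add: cs_def nth_code_list_encode del: upt_Suc)
  moreover have "edges_decode (nth_code (list_encode cs) k) = Ls k"
    if "1 \<le> k" "k \<le> order_bound gs u + ?y" for k
    using that by (simp add: cs_def nth_code_list_encode del: upt_Suc)
  ultimately have "order_cert gs u w ?y (list_decode (nth_code (list_encode cs) 0))
      (\<lambda>k. edges_decode (nth_code (list_encode cs) k))"
    using cert by (auto simp: order_cert_def split: if_splits)
  then have "check_code (pair ?y (list_encode cs)) (enc_words gs) (enc_word u) (enc_word w)"
    by (simp add: check_code_correct)
  then show ?thesis by blast
qed

section \<open>The algorithm\<close>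

lemma computable_OrdS_rcos:
  "\<exists>r. \<forall>gs u w. set gs \<subseteq> carrier (FG n) \<longrightarrow> u \<in> carrier (FG n) \<longrightarrow> w \<in> carrier (FG n) \<longrightarrow>
     eval r [enc_words gs, enc_word u, enc_word w] (OrdS (FG n) (generate (FG n) (set gs) #>\<^bsub>FG n\<^esub> u) w)"
proof -
  define p where "p = (\<lambda>ys::nat list. if check_code (ys!0) (ys!1) (ys!2) (ys!3) then 0 else 1::nat)"
  have "computable (Suc 3) p"
    unfolding p_def using decidable_check_code by (intro computable_If computable_const) simp_all
  then obtain r0 where r0: "\<forall>xs. length xs = 3 \<and> (\<exists>z. p (z # xs) = 0) \<longrightarrow> eval r0 xs (LEAST z. p (z # xs) = 0)"
    using eval_Mu_Least by blast
  obtain r where r: "\<And>xs y. eval r0 xs y \<Longrightarrow> eval r xs (pfst y)"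
    using eval_postcompose[of pfst r0] computable_pfst[OF computable_proj] by auto
  show ?thesis
  proof (intro exI[of _ r] allI impI)
    fix gs u w
    assume valid: "set gs \<subseteq> carrier (FG n)" "u \<in> carrier (FG n)" "w \<in> carrier (FG n)"
    let ?xs = "[enc_words gs, enc_word u, enc_word w]"
    have ex: "\<exists>z. p (z # ?xs) = 0" using check_code_complete[OF valid] by (simp add: p_def)
    then have "check_code (LEAST z. p (z # ?xs) = 0) (enc_words gs) (enc_word u) (enc_word w)"
      using LeastI_ex[OF ex] by (simp add: p_def split: if_splits)
    then have "pfst (LEAST z. p (z # ?xs) = 0) = OrdS (FG n) (generate (FG n) (set gs) #>\<^bsub>FG n\<^esub> u) w"
      using order_cert_sound[OF valid] by (simp add: check_code_correct)
    moreover have "eval r0 ?xs (LEAST z. p (z # ?xs) = 0)" using r0 ex by simp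
    ultimately show "eval r ?xs (OrdS (FG n) (generate (FG n) (set gs) #>\<^bsub>FG n\<^esub> u) w)"
      using r by metis
  qed
qed

theorem theorem6p30:
  fixes n :: nat
  shows "(\<exists>r. \<forall>gs u w.
            set gs \<subseteq> carrier (free_group n) \<longrightarrow> u \<in> carrier (free_group n) \<longrightarrow>
            w \<in> carrier (free_group n) \<longrightarrow>
            eval r [enc_words gs, enc_word u, enc_word w]
              (OrdS (free_group n) (generate (free_group n) (set gs) #>\<^bsub>free_group n\<^esub> u) w))
       \<and> (\<exists>r. \<forall>gs w.
            set gs \<subseteq> carrier (free_group n) \<longrightarrow> w \<in> carrier (free_group n) \<longrightarrow>
            eval r [enc_words gs, enc_word w]
              (OrdS (free_group n) (generate (free_group n) (set gs)) w))
       \<and> (\<exists>r. \<forall>gs w.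
            set gs \<subseteq> carrier (free_group n) \<longrightarrow> w \<in> carrier (free_group n) \<longrightarrow>
            eval r [enc_words gs, enc_word w]
              (if OrdS (free_group n) (generate (free_group n) (set gs)) w \<noteq> 0 then 1 else 0))"
proof -
  obtain r where r: "\<forall>gs u w. set gs \<subseteq> carrier (FG n) \<longrightarrow> u \<in> carrier (FG n) \<longrightarrow> w \<in> carrier (FG n) \<longrightarrow>
      eval r [enc_words gs, enc_word u, enc_word w] (OrdS (FG n) (generate (FG n) (set gs) #>\<^bsub>FG n\<^esub> u) w)"
    using computable_OrdS_rcos by blast
  let ?r = "Comp r [Proj 0, Zero, Proj 1]"
  have subgroup_ord: "eval ?r [enc_words gs, enc_word w] (OrdS (FG n) (generate (FG n) (set gs)) w)"
    if gs: "set gs \<subseteq> carrier (FG n)" and w: "w \<in> carrier (FG n)" for gs w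
  proof -
    have "generate (FG n) (set gs) #>\<^bsub>FG n\<^esub> [] = generate (FG n) (set gs)"
      using FG.coset_mult_one[OF FG.generate_incl[OF gs]] by simp
    then have "eval r [enc_words gs, 0, enc_word w] (OrdS (FG n) (generate (FG n) (set gs)) w)"
      using r[rule_format, OF gs FG.one_closed w] by simp
    then show ?thesis by (rule eval_drop_middle_zero)
  qed
  have "computable 1 (\<lambda>ys. if ys ! 0 \<noteq> 0 then 1 else 0)"
    by (intro computable_If decidable_not decidable_eq computable_proj computable_const) simp
  then obtain r' where "\<And>xs y. eval ?r xs y \<Longrightarrow> eval r' xs (if y \<noteq> 0 then 1 else 0)"
    using eval_postcompose[of "\<lambda>y. if y \<noteq> 0 then 1 else 0" ?r] by blast
  then show ?thesis using r subgroup_ord by blast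
qed

end
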